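(* Let $\psi\in\Psi$ satisfy $\lim_{t\to\infty}\frac{\psi(t\psi(t))}{\psi(t)}=1$ and let $\tau_\omega$ be a Connes–Dixmier trace on $M_\psi$. Then for every positive $x\in M_\psi$, $$\tau_\omega(x)=\omega\Big(t\mapsto\frac{-1}{\psi(t)}\int_{1/t}^\infty\lambda\,dn_x(\lambda)\Big).$$
   Context: $\Psi$ is the class of concave increasing functions $\psi$ on $[0,\infty)$ with $\psi(\infty)=\infty$, $\psi(t)=O(t)$ as $t\to0$, $\psi(t)=o(t)$ as $t\to\infty$. For bounded measurable $x$ on $(0,\infty)$, $n_x(\lambda)=m(\{s:|x(s)|>\lambda\})$, $x^*$ is the nonincreasing right-continuous rearrangement of $|x|$, and $-\int_z^\infty\lambda\,dn_x(\lambda)=\int_0^{n_x(z)}x^*(s)ds$. $M_\psi$ is the space of bounded measurable $x$ with $\|x\|_{M_\psi}=\sup_{t>0}\frac1{\psi(t)}\int_0^tx^*(s)ds<\infty$. A generalised limit on $L_\infty(0,\infty)$ is a positive linear functional $\gamma$ with $\gamma(1)=1$ and $\gamma(y)=0$ whenever $y(t)\to0$. With $(My)(t)=\frac1{\log t}\int_1^t\frac{y(s)}sds$, a Connes–Dixmier trace on $M_\psi$ is $\tau_\omega(x)=\omega(t\mapsto\frac1{\psi(t)}\int_0^tx^*(s)ds)$, $0\le x\in M_\psi$, where $\omega=\gamma\circ M$ for a generalised limit $\gamma$ (such $\omega$ is a dilation invariant generalised limit and $\tau_\omega$ is additive on the positive cone). Values of functions of $t$ on a bounded initial interval do not affect $\omega$.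 *)

theory Defs
  imports "HOL-Analysis.Analysis" "HOL-Library.Landau_Symbols"
begin

definition Psi_class :: "(real \<Rightarrow> real) set" where
  "Psi_class = {\<psi>. concave_on {0..} \<psi> \<and> mono_on {0..} \<psi> \<and>
      filterlim \<psi> at_top at_top \<and>
      \<psi> \<in> O[at_right 0](\<lambda>t. t) \<and> \<psi> \<in> o[at_top](\<lambda>t. t)}"

text \<open>Bounded measurable functions on (0,infinity) (values at s <= 0 are ignored).\<close>
definition bdd_meas :: "(real \<Rightarrow> real) \<Rightarrow> bool" where
  "bdd_meas x \<longleftrightarrow> x \<in> borel_measurable lborel \<and> (\<exists>C. \<forall>s>0. \<bar>x s\<bar> \<le> C)"

definition distfun :: "(real \<Rightarrow> real) \<Rightarrow> real \<Rightarrow> ennreal" where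
  "distfun x l = emeasure lborel {s. 0 < s \<and> \<bar>x s\<bar> > l}"

definition rearr :: "(real \<Rightarrow> real) \<Rightarrow> real \<Rightarrow> real" where
  "rearr x t = Inf {l. 0 \<le> l \<and> distfun x l \<le> ennreal t}"

text \<open>The Lebesgue--Stieltjes quantity  - \<integral>_z^\<infinity> \<lambda> dn_x(\<lambda>)  (for z > 0):
  the measure -dn_x on (z,infinity) is the Lebesgue--Stieltjes measure of the
  nondecreasing right-continuous function \<lambda> \<mapsto> - n_x(max \<lambda> z).\<close>
definition stieltjes_tail :: "(real \<Rightarrow> real) \<Rightarrow> real \<Rightarrow> real" where
  "stieltjes_tail x z = enn2real (\<integral>\<^sup>+ u. ennreal u * indicator {z<..} u
       \<partial>interval_measure (\<lambda>l. - enn2real (distfun x (max l z))))"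

definition M_psi :: "(real \<Rightarrow> real) \<Rightarrow> (real \<Rightarrow> real) set" where
  "M_psi \<psi> = {x. bdd_meas x \<and>
      (\<exists>C. \<forall>t>0. (LBINT s:{0..t}. rearr x s) / \<psi> t \<le> C)}"

definition Linf :: "(real \<Rightarrow> real) set" where
  "Linf = {y. y \<in> borel_measurable lborel \<and> (\<exists>C. AE s in lborel. 0 < s \<longrightarrow> \<bar>y s\<bar> \<le> C)}"

definition gen_limit :: "((real \<Rightarrow> real) \<Rightarrow> real) \<Rightarrow> bool" where
  "gen_limit \<gamma> \<longleftrightarrow>
     (\<forall>y\<in>Linf. \<forall>z\<in>Linf. \<forall>a b. \<gamma> (\<lambda>t. a * y t + b * z t) = a * \<gamma> y + b * \<gamma> z) \<and>
     (\<forall>y\<in>Linf. (AE s in lborel. 0 < s \<longrightarrow> 0 \<le> y s) \<longrightarrow> 0 \<le> \<gamma> y) \<and>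
     \<gamma> (\<lambda>_. 1) = 1 \<and>
     (\<forall>y\<in>Linf. (y \<longlongrightarrow> 0) at_top \<longrightarrow> \<gamma> y = 0)"

text \<open>(My)(t) = (1/log t) \<integral>_1^t y(s)/s ds, for t > 1 (irrelevant elsewhere).\<close>
definition Mop :: "(real \<Rightarrow> real) \<Rightarrow> real \<Rightarrow> real" where
  "Mop y t = (if 1 < t then (LBINT s:{1..t}. y s / s) / ln t else 0)"

text \<open>Connes--Dixmier trace tau_omega with omega = gamma o M.\<close>
definition CD_trace :: "((real \<Rightarrow> real) \<Rightarrow> real) \<Rightarrow> (real \<Rightarrow> real) \<Rightarrow> (real \<Rightarrow> real) \<Rightarrow> real" where
  "CD_trace \<omega> \<psi> x = \<omega> (\<lambda>t. (LBINT s:{0..t}. rearr x s) / \<psi> t)"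

end

theory Submission
  imports Defs
begin

text \<open>Write \<open>F t = \<integral>\<^sub>0\<^sup>t x\<^sup>*\<close> and \<open>N t = n\<^sub>x (1/t)\<close>. By the layer-cake formula the Stieltjes
  integral equals \<open>F (N t)\<close>, so one has to show that the logarithmic means of \<open>F/\<psi>\<close> and of
  \<open>F\<circ>N/\<psi>\<close> have the same asymptotics; a generalised limit then cannot tell them apart.
  Since \<open>x\<^sup>* > 1/t\<close> exactly on \<open>[0, N t)\<close>, \<open>F t \<le> F (N t) + 1\<close>, which gives one inequality.
  Conversely \<open>F \<le> C \<psi>\<close> and the concavity of \<open>\<psi>\<close> force \<open>N t \<le> c t\<close> with \<open>c \<approx> 2 C \<psi> (C t)\<close>, so
  \<open>F (N t)/\<psi> t \<le> (F/\<psi>)(c t) \<cdot> \<psi> (c t)/\<psi> t\<close>, and the last ratio tends to \<open>1\<close> by the hypothesis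
  \<open>\<psi> (t \<psi> t)/\<psi> t \<rightarrow> 1\<close>. Choosing \<open>c\<close> constant on the blocks \<open>[e\<^sup>k, e\<^sup>k\<^sup>+\<^sup>1)\<close>, the dilation changes
  \<open>\<integral>\<^sub>1\<^sup>T (F/\<psi>)(s) ds/s\<close> by \<open>O(ln c)\<close> only, and \<open>ln c = O(ln \<psi> T) = o(ln T)\<close>.\<close>

section \<open>Functions of the class \<open>\<Psi>\<close>\<close>

lemma filterlim_const_mult_at_top: "K > 0 \<Longrightarrow> filterlim (\<lambda>t::real. K * t) at_top at_top"
  by (rule filterlim_tendsto_pos_mult_at_top[OF tendsto_const]) (auto simp: filterlim_ident)

locale Psi_function =
  fixes \<psi> :: "real \<Rightarrow> real"
  assumes Psi: "\<psi> \<in> Psi_class"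
begin

lemma concave: "concave_on {0..} \<psi>"
  and mono: "mono_on {0..} \<psi>"
  and psi_at_top: "filterlim \<psi> at_top at_top"
  and bigo_at_0: "\<psi> \<in> O[at_right 0](\<lambda>t. t)"
  and smallo_at_top: "\<psi> \<in> o[at_top](\<lambda>t. t)"
  using Psi by (auto simp: Psi_class_def)

lemma psi_mono: "0 \<le> a \<Longrightarrow> a \<le> b \<Longrightarrow> \<psi> a \<le> \<psi> b"
  using mono by (auto simp: mono_on_def)

lemma eventually_psi_ge: "eventually (\<lambda>t. \<psi> t \<ge> K) at_top"
  using psi_at_top by (simp add: filterlim_at_top)

lemma psi_nonneg:
  assumes "0 < t" shows "0 \<le> \<psi> t"
proof (rule ccontr)
  assume "\<not> 0 \<le> \<psi> t"
  hence neg: "\<psi> t < 0" by simp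
  from bigo_at_0 obtain c where c: "c > 0" "eventually (\<lambda>x. norm (\<psi> x) \<le> c * norm x) (at_right 0)"
    by (auto simp: bigo_def)
  then obtain d where d: "d > 0" "\<And>x. 0 < x \<Longrightarrow> x < d \<Longrightarrow> \<bar>\<psi> x\<bar> \<le> c * \<bar>x\<bar>"
    by (auto simp: eventually_at_right_field)
  define e where "e = min (t/2) (min (d/2) (- \<psi> t / (2*c)))"
  have "\<psi> t / (2 * c) < 0" using c neg by (simp add: divide_neg_pos)
  hence e_pos: "0 < e" using c d neg assms by (simp add: e_def)
  have e_le: "e < d" "e \<le> t" using d assms by (auto simp: e_def)
  have "c * e \<le> c * (- \<psi> t / (2*c))" using c by (intro mult_left_mono) (auto simp: e_def)
  hence "c * e < - \<psi> t" using c neg by simp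
  moreover have "\<bar>\<psi> e\<bar> \<le> c * e" using d(2)[of e] e_pos e_le by simp
  moreover have "\<psi> e \<le> \<psi> t" using psi_mono[of e t] e_pos e_le by simp
  ultimately show False by linarith
qed

text \<open>Concavity alone does not give \<open>\<psi> 0 \<ge> 0\<close>
  (a concave function may jump down at the endpoint), so the chord is taken from a point
  \<open>e > 0\<close> so close to \<open>0\<close> that \<open>e * \<psi> b\<close> is negligible.\<close>
lemma psi_mult_le:
  assumes "0 < a" "a \<le> b" shows "a * \<psi> b \<le> b * \<psi> a"
proof (rule ccontr)
  assume "\<not> ?thesis"
  hence gt: "a * \<psi> b > b * \<psi> a" by simp
  have pb: "\<psi> b \<ge> 0" using psi_nonneg assms by simp
  have ab: "a < b" using gt assms by (cases "a = b") auto
  define D where "D = a * \<psi> b - b * \<psi> a"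
  have D: "D > 0" using gt by (simp add: D_def)
  define e where "e = min (a/2) (D / (2 * (\<psi> b + 1)))"
  have e: "0 < e" "e < a" using assms D pb by (auto simp: e_def)
  have "e * \<psi> b \<le> D / (2 * (\<psi> b + 1)) * \<psi> b"
    using pb by (intro mult_right_mono) (auto simp: e_def)
  also have "\<dots> < D"
    using D pb by (simp add: field_simps) (smt (verit) mult_nonneg_nonneg)
  finally have eD: "e * \<psi> b < D" .
  define u where "u = (a - e) / (b - e)"
  have u: "0 \<le> u" "u \<le> 1" using e ab by (auto simp: u_def field_simps)
  have "u * (b - e) = a - e" using e ab by (simp add: u_def)
  hence "(1 - u) *\<^sub>R e + u *\<^sub>R b = a" by (simp add: algebra_simps)
  hence "\<psi> a \<ge> (1 - u) * \<psi> e + u * \<psi> b"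
    using concave_onD[OF concave u, of e b] e assms by auto
  moreover have "(1 - u) * \<psi> e \<ge> 0" using u psi_nonneg[of e] e by simp
  ultimately have "\<psi> a \<ge> u * \<psi> b" by linarith
  hence "(b - e) * \<psi> a \<ge> (a - e) * \<psi> b" using e ab by (simp add: u_def field_simps)
  moreover have "e * \<psi> a \<ge> 0" using e psi_nonneg[of a] assms by simp
  ultimately show False using eD by (simp add: D_def algebra_simps)
qed

lemma psi_pos:
  assumes "0 < t" shows "0 < \<psi> t"
proof (rule ccontr)
  assume "\<not> ?thesis"
  hence zero: "\<psi> t = 0" using psi_nonneg[OF assms] by simp
  have "eventually (\<lambda>b. b \<ge> t \<and> \<psi> b \<ge> 1) at_top"
    using eventually_ge_at_top eventually_psi_ge by (rule eventually_conj)
  then obtain b where b: "b \<ge> t" "\<psi> b > 0" by (auto dest: eventually_happens)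
  show False using psi_mult_le[OF assms b(1)] zero assms b(2) by (simp add: mult_le_0_iff)
qed

end

lemma le_pow_of_dilation_bound:
  fixes f :: "real \<Rightarrow> real"
  assumes M: "M > 1" and q: "q \<ge> 1" and t1: "t1 > 0"
    and mono: "\<And>a b. t1 \<le> a \<Longrightarrow> a \<le> b \<Longrightarrow> f a \<le> f b"
    and pos: "\<And>t. t \<ge> t1 \<Longrightarrow> f t > 0"
    and dil: "\<And>t. t \<ge> t1 \<Longrightarrow> f (M * t) \<le> q * f t"
  shows "t1 \<le> t \<Longrightarrow> t \<le> t1 * M ^ (k + 1) \<Longrightarrow> f t \<le> q ^ k * f (t1 * M)"
proof (induction k arbitrary: t)
  case 0
  then show ?case using M t1 by (auto intro: mono)
next
  case (Suc k)
  have "f (t1 * M) > 0" using M t1 by (intro pos) simp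
  show ?case
  proof (cases "t \<le> t1 * M ^ (k + 1)")
    case True
    hence "f t \<le> q ^ k * f (t1 * M)" using Suc by blast
    also have "\<dots> \<le> q ^ Suc k * f (t1 * M)"
      using \<open>f (t1 * M) > 0\<close> q by (intro mult_right_mono power_increasing) auto
    finally show ?thesis .
  next
    case False
    have "t1 * M * 1 \<le> t1 * M * M ^ k"
      using M t1 by (intro mult_left_mono one_le_power) auto
    also have "\<dots> = t1 * M ^ (k + 1)" by simp
    finally have "t1 * M \<le> t" using False by linarith
    hence s1: "t1 \<le> t / M" using M by (simp add: field_simps)
    have s2: "t / M \<le> t1 * M ^ (k + 1)" using Suc.prems M by (simp add: field_simps)
    have "f t = f (M * (t / M))" using M by simp
    also have "\<dots> \<le> q * f (t / M)" by (rule dil[OF s1])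
    also have "\<dots> \<le> q * (q ^ k * f (t1 * M))" using Suc.IH[OF s1 s2] q by (auto intro: mult_left_mono)
    finally show ?thesis by simp
  qed
qed

lemma ln_le_of_dilation_bound:
  fixes f :: "real \<Rightarrow> real"
  assumes M: "M > 1" and q: "q \<ge> 1" and t1: "t1 > 0"
    and mono: "\<And>a b. t1 \<le> a \<Longrightarrow> a \<le> b \<Longrightarrow> f a \<le> f b"
    and pos: "\<And>t. t \<ge> t1 \<Longrightarrow> f t > 0"
    and dil: "\<And>t. t \<ge> t1 \<Longrightarrow> f (M * t) \<le> q * f t"
  shows "\<exists>c. \<forall>t\<ge>t1. ln (f t) \<le> ln q / ln M * ln t + c"
proof -
  define c where "c = ln (f (t1 * M)) - ln q / ln M * ln t1"
  have "ln (f t) \<le> ln q / ln M * ln t + c" if t: "t \<ge> t1" for t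
  proof -
    define k where "k = nat \<lfloor>ln (t / t1) / ln M\<rfloor>"
    have lnM: "ln M > 0" using M by simp
    have q0: "ln (t / t1) / ln M \<ge> 0" using t t1 lnM by simp
    have kle: "real k \<le> ln (t / t1) / ln M" using q0 by (simp add: k_def)
    have "ln (t / t1) / ln M < real k + 1" using q0 by (simp add: k_def)
    hence "ln (t / t1) < (real k + 1) * ln M" using lnM by (simp add: field_simps)
    also have "\<dots> = ln (M ^ (k + 1))" using M by (subst ln_realpow) auto
    finally have "ln (t / t1) < ln (M ^ (k + 1))" .
    hence "t \<le> t1 * M ^ (k + 1)" using t t1 M by (simp add: field_simps)
    moreover have "f (t1 * M) > 0" using t1 M by (intro pos) simp
    ultimately have "ln (f t) \<le> ln (q ^ k * f (t1 * M))"
      using le_pow_of_dilation_bound[where f=f, OF assms t] pos[OF t] q by (subst ln_le_cancel_iff) auto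
    also have "\<dots> = real k * ln q + ln (f (t1 * M))"
      using pos[of "t1 * M"] q t1 M by (simp add: ln_mult ln_realpow)
    also have "real k * ln q \<le> ln (t / t1) / ln M * ln q"
      using kle q by (intro mult_right_mono) auto
    also have "ln (t / t1) / ln M * ln q = ln q / ln M * ln t - ln q / ln M * ln t1"
      using t t1 lnM by (simp add: ln_div field_simps)
    finally show ?thesis by (simp add: c_def)
  qed
  thus ?thesis by blast
qed

locale slowly_varying_Psi = Psi_function +
  assumes slow: "((\<lambda>t. \<psi> (t * \<psi> t) / \<psi> t) \<longlongrightarrow> 1) at_top"
begin

lemma psi_dilation_ratio:
  assumes K: "K \<ge> 1" shows "((\<lambda>t. \<psi> (K * t) / \<psi> t) \<longlongrightarrow> 1) at_top"
proof (rule tendsto_sandwich[OF _ _ tendsto_const slow])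
  show "\<forall>\<^sub>F t in at_top. 1 \<le> \<psi> (K * t) / \<psi> t"
    using eventually_gt_at_top[of 0]
  proof eventually_elim
    case (elim t)
    have "\<psi> t \<le> \<psi> (K * t)" using K elim by (intro psi_mono) auto
    thus ?case using psi_pos[OF elim] by simp
  qed
  show "\<forall>\<^sub>F t in at_top. \<psi> (K * t) / \<psi> t \<le> \<psi> (t * \<psi> t) / \<psi> t"
    using eventually_gt_at_top[of 0] eventually_psi_ge[of K]
  proof eventually_elim
    case (elim t)
    have "\<psi> (K * t) \<le> \<psi> (t * \<psi> t)" using K elim
      by (intro psi_mono) (auto simp: mult.commute mult_right_mono)
    thus ?case using psi_pos[OF elim(1)] by (simp add: divide_right_mono)
  qed
qed

lemma psi_dilated_slow_ratio:
  assumes K: "K \<ge> 1"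
  shows "((\<lambda>t. \<psi> (K * t * \<psi> (K * t)) / \<psi> t) \<longlongrightarrow> 1) at_top"
proof -
  have "((\<lambda>t. \<psi> (K * t * \<psi> (K * t)) / \<psi> (K * t)) \<longlongrightarrow> 1) at_top"
    using filterlim_compose[OF slow filterlim_const_mult_at_top[of K]] K by simp
  from tendsto_mult[OF this psi_dilation_ratio[OF K]]
  have "((\<lambda>t. \<psi> (K * t * \<psi> (K * t)) / \<psi> (K * t) * (\<psi> (K * t) / \<psi> t)) \<longlongrightarrow> 1) at_top"
    by simp
  moreover have "eventually (\<lambda>t. \<psi> (K * t * \<psi> (K * t)) / \<psi> (K * t) * (\<psi> (K * t) / \<psi> t)
      = \<psi> (K * t * \<psi> (K * t)) / \<psi> t) at_top"
    using eventually_gt_at_top[of 0]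
  proof eventually_elim
    case (elim t)
    have "\<psi> (K * t) > 0" using K elim by (intro psi_pos) simp
    thus ?case by simp
  qed
  ultimately show ?thesis by (rule Lim_transform_eventually)
qed

lemma ln_psi_over_ln_tendsto_0: "((\<lambda>t. ln (\<psi> t) / ln t) \<longlongrightarrow> 0) at_top"
proof (rule tendstoI)
  fix e :: real assume e: "e > 0"
  have "eventually (\<lambda>t. \<psi> (exp 1 * t) / \<psi> t < exp (e / 4)) at_top"
    using psi_dilation_ratio[of "exp 1"] e by (intro order_tendstoD) auto
  then obtain t0 where t0: "\<And>t. t \<ge> t0 \<Longrightarrow> \<psi> (exp 1 * t) / \<psi> t < exp (e / 4)"
    by (auto simp: eventually_at_top_linorder)
  define t1 where "t1 = max 1 t0"
  have "\<exists>c. \<forall>t\<ge>t1. ln (\<psi> t) \<le> ln (exp (e / 4)) / ln (exp 1) * ln t + c"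
  proof (rule ln_le_of_dilation_bound)
    show "\<psi> (exp 1 * t) \<le> exp (e / 4) * \<psi> t" if "t \<ge> t1" for t
      using t0[of t] that psi_pos[of t] by (simp add: t1_def field_simps)
  qed (use e in \<open>auto simp: t1_def intro: psi_mono psi_pos\<close>)
  then obtain c where c: "\<And>t. t \<ge> t1 \<Longrightarrow> ln (\<psi> t) \<le> e / 4 * ln t + c" by auto
  have "filterlim (\<lambda>t. e / 4 * ln t) at_top at_top"
    using e by (intro filterlim_tendsto_pos_mult_at_top[OF tendsto_const] ln_at_top) auto
  hence "eventually (\<lambda>t. \<bar>c\<bar> \<le> e / 4 * ln t) at_top" unfolding filterlim_at_top by blast
  thus "eventually (\<lambda>t. dist (ln (\<psi> t) / ln t) 0 < e) at_top"
    using eventually_ge_at_top[of t1] eventually_gt_at_top[of 1] eventually_psi_ge[of 1]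
  proof eventually_elim
    case (elim t)
    have "0 \<le> ln (\<psi> t)" "ln (\<psi> t) \<le> e / 2 * ln t" using c[of t] elim by auto
    moreover have "ln t > 0" using elim by simp
    ultimately have "\<bar>ln (\<psi> t) / ln t\<bar> \<le> e / 2" by (simp add: field_simps)
    thus ?case using e by (simp add: dist_real_def del: abs_divide)
  qed
qed

lemma ln_psi_dilated_over_ln_tendsto_0:
  assumes c: "c > 0" shows "((\<lambda>T. ln (\<psi> (c * T)) / ln T) \<longlongrightarrow> 0) at_top"
proof -
  have "((\<lambda>T. ln (\<psi> (c * T)) / ln (c * T) * (ln c / ln T + 1)) \<longlongrightarrow> 0 * (0 + 1)) at_top"
    by (intro tendsto_mult filterlim_compose[OF ln_psi_over_ln_tendsto_0 filterlim_const_mult_at_top[OF c]]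
        tendsto_add tendsto_const tendsto_divide_0[OF tendsto_const]
        filterlim_at_top_imp_at_infinity[OF ln_at_top])
  moreover have "eventually (\<lambda>T. ln (c * T) > 0) at_top"
    using filterlim_compose[OF ln_at_top filterlim_const_mult_at_top[OF c]]
    by (simp add: filterlim_at_top_dense)
  hence "eventually (\<lambda>T. ln (\<psi> (c * T)) / ln (c * T) * (ln c / ln T + 1)
      = ln (\<psi> (c * T)) / ln T) at_top"
    using eventually_gt_at_top[of 1]
  proof eventually_elim
    case (elim T)
    hence "ln c / ln T + 1 = ln (c * T) / ln T" using c by (simp add: ln_mult field_simps)
    thus ?case using elim by simp
  qed
  ultimately show ?thesis by (simp add: Lim_transform_eventually)
qed

end

section \<open>Logarithmic means\<close>

definition log_integral :: "(real \<Rightarrow> real) \<Rightarrow> real \<Rightarrow> ennreal" where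
  "log_integral h T = (\<integral>\<^sup>+ s. ennreal (h s / s) * indicator {1..T} s \<partial>lborel)"

lemma nn_integral_const_div_Icc:
  assumes c: "0 \<le> c" and ab: "1 \<le> a" "a \<le> b"
  shows "(\<integral>\<^sup>+ s. ennreal (c / s) * indicator {a..b} s \<partial>lborel) = ennreal (c * (ln b - ln a))"
proof -
  have cont: "continuous_on {a..b} (\<lambda>s. c / s)" using ab by (intro continuous_intros) auto
  have "(LINT s|lborel. indicator {a..b} s *\<^sub>R (c / s)) = c * ln b - c * ln a"
  proof (rule integral_FTC_atLeastAtMost[OF ab(2) _ cont])
    fix s assume s: "a \<le> s" "s \<le> b"
    have "((\<lambda>s. c * ln s) has_real_derivative c / s) (at s within {a..b})"
      using s ab by (auto intro!: derivative_eq_intros simp: divide_inverse)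
    thus "((\<lambda>s. c * ln s) has_vector_derivative c / s) (at s within {a..b})"
      by (simp add: has_real_derivative_iff_has_vector_derivative)
  qed
  moreover have "(\<integral>\<^sup>+ s. ennreal (indicator {a..b} s *\<^sub>R (c / s)) \<partial>lborel) =
      ennreal (LINT s|lborel. indicator {a..b} s *\<^sub>R (c / s))"
    using borel_integrable_atLeastAtMost'[OF cont] ab c
    by (intro nn_integral_eq_integral) (auto simp: set_integrable_def split: split_indicator)
  moreover have "(\<integral>\<^sup>+ s. ennreal (c / s) * indicator {a..b} s \<partial>lborel) =
      (\<integral>\<^sup>+ s. ennreal (indicator {a..b} s *\<^sub>R (c / s)) \<partial>lborel)"
    by (intro nn_integral_cong) (auto split: split_indicator)
  ultimately show ?thesis by (simp only: right_diff_distrib)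
qed

lemma log_integral_const: "0 \<le> c \<Longrightarrow> 1 \<le> T \<Longrightarrow> log_integral (\<lambda>_. c) T = ennreal (c * ln T)"
  using nn_integral_const_div_Icc[of c 1 T] by (simp add: log_integral_def)

lemma log_integral_mono:
  "(\<And>s. 1 \<le> s \<Longrightarrow> s \<le> T \<Longrightarrow> h1 s \<le> h2 s) \<Longrightarrow> log_integral h1 T \<le> log_integral h2 T"
  unfolding log_integral_def
  by (intro nn_integral_mono) (auto split: split_indicator intro!: ennreal_leI divide_right_mono)

lemma log_integral_add:
  assumes "h1 \<in> borel_measurable borel" "h2 \<in> borel_measurable borel"
    and "\<And>s. 1 \<le> s \<Longrightarrow> 0 \<le> h1 s" "\<And>s. 1 \<le> s \<Longrightarrow> 0 \<le> h2 s"
  shows "log_integral (\<lambda>s. h1 s + h2 s) T = log_integral h1 T + log_integral h2 T"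
proof -
  have "log_integral (\<lambda>s. h1 s + h2 s) T = (\<integral>\<^sup>+ s. ennreal (h1 s / s) * indicator {1..T} s
      + ennreal (h2 s / s) * indicator {1..T} s \<partial>lborel)"
    unfolding log_integral_def using assms
    by (intro nn_integral_cong) (auto split: split_indicator simp: add_divide_distrib ennreal_plus)
  also have "\<dots> = log_integral h1 T + log_integral h2 T"
    unfolding log_integral_def using assms by (intro nn_integral_add) auto
  finally show ?thesis .
qed

lemma log_integral_eq_Mop:
  assumes hm[measurable]: "h \<in> borel_measurable borel" and T: "1 < T"
    and hb: "\<And>s. 1 \<le> s \<Longrightarrow> 0 \<le> h s \<and> h s \<le> M"
  shows "log_integral h T = ennreal (ln T * Mop h T)"
proof -
  have "set_integrable lborel {1..T} (\<lambda>s. h s / s)"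
    unfolding set_integrable_def
  proof (rule integrableI_bounded_set_indicator[where B=M])
    show "AE s\<in>{1..T} in lborel. norm (h s / s) \<le> M"
    proof (intro AE_I2 impI)
      fix s :: real assume s: "s \<in> {1..T}"
      hence "h s / s \<le> h s" using hb[of s] by (auto simp: divide_le_eq mult_le_cancel_left1)
      thus "norm (h s / s) \<le> M" using hb[of s] s by auto
    qed
  qed (auto simp: emeasure_lborel_Icc_eq)
  hence "log_integral h T = ennreal (LBINT s:{1..T}. h s / s)"
    unfolding log_integral_def set_lebesgue_integral_def using hb
    by (subst nn_integral_eq_integral[symmetric])
       (auto simp: set_integrable_def intro!: nn_integral_cong split: split_indicator)
  thus ?thesis using T by (simp add: Mop_def)
qed

lemma Mop_nonneg:
  assumes "h \<in> borel_measurable borel" "\<And>s. 1 \<le> s \<Longrightarrow> 0 \<le> h s \<and> h s \<le> M"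
  shows "0 \<le> Mop h T"
  unfolding Mop_def set_lebesgue_integral_def using assms(2)
  by (auto intro!: divide_nonneg_pos integral_nonneg_AE split: split_indicator)

lemma Mop_le:
  assumes hm: "h \<in> borel_measurable borel" and hb: "\<And>s. 1 \<le> s \<Longrightarrow> 0 \<le> h s \<and> h s \<le> M"
  shows "Mop h T \<le> M"
proof (cases "T > 1")
  case False thus ?thesis using hb[of 1] by (simp add: Mop_def)
next
  case True
  have M: "M \<ge> 0" using hb[of 1] by simp
  have "ennreal (ln T * Mop h T) = log_integral h T"
    by (rule log_integral_eq_Mop[OF hm True hb, symmetric])
  also have "\<dots> \<le> log_integral (\<lambda>_. M) T" by (rule log_integral_mono) (use hb in auto)
  also have "\<dots> = ennreal (M * ln T)" using M True by (intro log_integral_const) auto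
  finally show ?thesis using True M by (simp add: ennreal_le_iff mult.commute)
qed

lemma Mop_measurable:
  assumes hm[measurable]: "h \<in> borel_measurable borel"
  shows "Mop h \<in> borel_measurable lborel"
proof -
  have "(\<lambda>p. (if 1 \<le> snd p \<and> snd p \<le> fst p then 1 else 0) * (h (snd p) / snd p))
      \<in> borel_measurable (lborel \<Otimes>\<^sub>M lborel)" by measurable
  hence "(\<lambda>(t, s). indicator {1..t} s *\<^sub>R (h s / s)) \<in> borel_measurable (lborel \<Otimes>\<^sub>M lborel)"
    by (rule measurable_cong[THEN iffD1, rotated]) (auto split: split_indicator)
  hence "(\<lambda>t. LINT s|lborel. indicator {1..t} s *\<^sub>R (h s / s)) \<in> borel_measurable lborel"
    by (rule lborel.borel_measurable_lebesgue_integral)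
  thus ?thesis unfolding Mop_def[abs_def] set_lebesgue_integral_def by measurable
qed

lemma Mop_cong: "(\<And>s. 1 \<le> s \<Longrightarrow> h1 s = h2 s) \<Longrightarrow> Mop h1 = Mop h2"
  unfolding Mop_def by (intro ext if_cong refl arg_cong2[where f="(/)"] set_lebesgue_integral_cong) auto

lemma Mop_in_Linf:
  assumes "h \<in> borel_measurable borel" "\<And>s. 1 \<le> s \<Longrightarrow> 0 \<le> h s \<and> h s \<le> M"
  shows "Mop h \<in> Linf"
  unfolding Linf_def using Mop_measurable[OF assms(1)] Mop_nonneg[OF assms] Mop_le[OF assms]
  by (auto intro!: exI[of _ M])

lemma Mop_le_Mop_add:
  assumes [measurable]: "h1 \<in> borel_measurable borel" "h2 \<in> borel_measurable borel" "h3 \<in> borel_measurable borel"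
    and bnd: "\<And>s. 1 \<le> s \<Longrightarrow> 0 \<le> h1 s \<and> h1 s \<le> M" "\<And>s. 1 \<le> s \<Longrightarrow> 0 \<le> h2 s \<and> h2 s \<le> M"
      "\<And>s. 1 \<le> s \<Longrightarrow> 0 \<le> h3 s \<and> h3 s \<le> M"
    and T: "T > 1" and d: "d \<ge> 0"
    and le: "log_integral h1 T \<le> log_integral h2 T + log_integral h3 T + ennreal d"
  shows "Mop h1 T \<le> Mop h2 T + Mop h3 T + d / ln T"
proof -
  note nonneg = Mop_nonneg[OF assms(2) bnd(2)] Mop_nonneg[OF assms(3) bnd(3)]
  have "ennreal (ln T * Mop h1 T) \<le> ennreal (ln T * Mop h2 T + ln T * Mop h3 T + d)"
    using le T d nonneg
    by (simp add: log_integral_eq_Mop[OF _ T bnd(1)] log_integral_eq_Mop[OF _ T bnd(2)]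
        log_integral_eq_Mop[OF _ T bnd(3)] ennreal_plus[symmetric] del: ennreal_plus)
  hence "ln T * Mop h1 T \<le> ln T * Mop h2 T + ln T * Mop h3 T + d"
    using T d nonneg by (subst (asm) ennreal_le_iff) auto
  moreover have "ln T > 0" using T by simp
  ultimately have "Mop h1 T \<le> (ln T * Mop h2 T + ln T * Mop h3 T + d) / ln T"
    by (simp add: le_divide_eq mult.commute)
  also have "\<dots> = Mop h2 T + Mop h3 T + d / ln T" using \<open>ln T > 0\<close> by (simp add: add_divide_distrib)
  finally show ?thesis .
qed

lemma log_integral_le_split:
  assumes hb: "\<And>s. 1 \<le> s \<Longrightarrow> 0 \<le> h s \<and> h s \<le> M" and small: "\<And>s. s \<ge> T1 \<Longrightarrow> h s \<le> \<epsilon>"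
    and T: "1 \<le> T1" "T1 \<le> T" and \<epsilon>: "\<epsilon> \<ge> 0"
  shows "log_integral h T \<le> ennreal (M * ln T1 + \<epsilon> * ln T)"
proof -
  have M: "M \<ge> 0" using hb[of 1] by simp
  have "log_integral h T \<le> (\<integral>\<^sup>+ s. ennreal (M / s) * indicator {1..T1} s
      + ennreal (\<epsilon> / s) * indicator {1..T} s \<partial>lborel)"
    unfolding log_integral_def
  proof (intro nn_integral_mono)
    fix s :: real
    have "ennreal (h s / s) \<le> ennreal (M / s)" if "1 \<le> s" "s \<le> T1"
      using hb[of s] that by (intro ennreal_leI divide_right_mono) auto
    moreover have "ennreal (h s / s) \<le> ennreal (\<epsilon> / s)" if "1 \<le> s" "\<not> s \<le> T1"
      using small[of s] that by (intro ennreal_leI divide_right_mono) auto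
    ultimately show "ennreal (h s / s) * indicator {1..T} s \<le> ennreal (M / s) * indicator {1..T1} s
        + ennreal (\<epsilon> / s) * indicator {1..T} s"
      using T by (auto simp: indicator_def intro: add_increasing2)
  qed
  also have "\<dots> = ennreal (M * ln T1 + \<epsilon> * ln T)"
    using nn_integral_const_div_Icc[of M 1 T1] nn_integral_const_div_Icc[of \<epsilon> 1 T] M \<epsilon> T
    by (subst nn_integral_add) (auto simp: ennreal_plus)
  finally show ?thesis .
qed

lemma Mop_tendsto_0:
  assumes hm: "h \<in> borel_measurable borel"
    and hb: "\<And>s. 1 \<le> s \<Longrightarrow> 0 \<le> h s \<and> h s \<le> M"
    and lim: "(h \<longlongrightarrow> 0) at_top"
  shows "(Mop h \<longlongrightarrow> 0) at_top"
proof (rule tendstoI)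
  fix e :: real assume e: "e > 0"
  have M: "M \<ge> 0" using hb[of 1] by simp
  have "eventually (\<lambda>s. h s < e / 2) at_top" using lim e by (intro order_tendstoD) auto
  then obtain T0 where T0: "\<And>s. s \<ge> T0 \<Longrightarrow> h s < e / 2" by (auto simp: eventually_at_top_linorder)
  define T1 where "T1 = max 1 T0"
  have T1: "T1 \<ge> 1" "\<And>s. s \<ge> T1 \<Longrightarrow> h s \<le> e / 2" using T0 by (auto simp: T1_def less_imp_le)
  have "filterlim (\<lambda>T. e / 2 * ln T) at_top at_top"
    using e by (intro filterlim_tendsto_pos_mult_at_top[OF tendsto_const] ln_at_top) auto
  hence "eventually (\<lambda>T. M * ln T1 < e / 2 * ln T) at_top" by (simp add: filterlim_at_top_dense)
  thus "eventually (\<lambda>T. dist (Mop h T) 0 < e) at_top"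
    using eventually_ge_at_top[of T1] eventually_gt_at_top[of 1]
  proof eventually_elim
    case (elim T)
    have "ennreal (ln T * Mop h T) = log_integral h T"
      using elim by (intro log_integral_eq_Mop[OF hm _ hb, symmetric]) auto
    also have "\<dots> \<le> ennreal (M * ln T1 + e / 2 * ln T)"
      by (rule log_integral_le_split[where h=h, OF hb T1(2) T1(1)]) (use elim e in auto)
    finally have "ln T * Mop h T \<le> M * ln T1 + e / 2 * ln T" using M e T1 elim by (subst (asm) ennreal_le_iff) auto
    also have "\<dots> < ln T * e" using elim by (simp add: field_simps)
    finally have "Mop h T < e" using elim by simp
    thus ?case using Mop_nonneg[OF hm hb] by (simp add: dist_real_def)
  qed
qed

lemma nn_integral_dilation:
  assumes [measurable]: "f \<in> borel_measurable borel" and c: "c > 0" and p: "p > 0"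
  shows "(\<integral>\<^sup>+ s. ennreal (f (c * s) / s) * indicator {p..<q} s \<partial>lborel) =
         (\<integral>\<^sup>+ u. ennreal (f u / u) * indicator {c * p..<c * q} u \<partial>lborel)"
proof -
  let ?g = "\<lambda>u. ennreal (f u / u) * indicator {c * p..<c * q} u"
  have "(\<integral>\<^sup>+ u. ?g u \<partial>lborel) = ennreal \<bar>c\<bar> * (\<integral>\<^sup>+ s. ?g (0 + c * s) \<partial>lborel)"
    by (rule nn_integral_real_affine) (use c in auto)
  also have "\<dots> = (\<integral>\<^sup>+ s. ennreal c * ?g (c * s) \<partial>lborel)"
    using c by (subst nn_integral_cmult) auto
  also have "\<dots> = (\<integral>\<^sup>+ s. ennreal (f (c * s) / s) * indicator {p..<q} s \<partial>lborel)"
  proof (intro nn_integral_cong)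
    fix s :: real
    have "c * s \<in> {c * p..<c * q} \<longleftrightarrow> s \<in> {p..<q}" using c by auto
    moreover have "ennreal c * ennreal (f (c * s) / (c * s)) = ennreal (f (c * s) / s)" if "s > 0"
      using c that by (simp add: ennreal_mult'[symmetric])
    ultimately show "ennreal c * ?g (c * s) = ennreal (f (c * s) / s) * indicator {p..<q} s"
      using p by (auto simp: mult.assoc split: split_indicator)
  qed
  finally show ?thesis by simp
qed

lemma floor_ln_bounds:
  assumes "s \<ge> 1"
  shows "exp (real (nat \<lfloor>ln s\<rfloor>)) \<le> s" "s < exp (real (nat \<lfloor>ln s\<rfloor>) + 1)"
proof -
  have eq: "real (nat \<lfloor>ln s\<rfloor>) = real_of_int \<lfloor>ln s\<rfloor>" using assms by simp
  have "exp (real_of_int \<lfloor>ln s\<rfloor>) \<le> exp (ln s)" by simp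
  thus "exp (real (nat \<lfloor>ln s\<rfloor>)) \<le> s" using assms eq by simp
  have "exp (ln s) < exp (real_of_int \<lfloor>ln s\<rfloor> + 1)" by simp
  thus "s < exp (real (nat \<lfloor>ln s\<rfloor>) + 1)" using assms eq by simp
qed

lemma dilated_blocks_disjoint:
  assumes "incseq c" "\<And>k. c k > 0"
  shows "disjoint_family (\<lambda>k. {c k * exp (real k)..<c k * exp (real k + 1)})"
  unfolding disjoint_family_on_def
proof (intro ballI impI)
  have le: "c k * exp (real k + 1) \<le> c j * exp (real j)" if "k < j" for k j
    using that assms monoD[OF assms(1), of k j] less_imp_le[OF assms(2)[of j]] by (intro mult_mono) auto
  fix k j :: nat assume "k \<noteq> j"
  hence "k < j \<or> j < k" by arith
  thus "{c k * exp (real k)..<c k * exp (real k + 1)} \<inter> {c j * exp (real j)..<c j * exp (real j + 1)} = {}"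
    using le[of k j] le[of j k] by auto
qed

lemma log_integral_blockwise_dilation_le_union:
  fixes h :: "real \<Rightarrow> real" and c :: "nat \<Rightarrow> real"
  assumes [measurable]: "h \<in> borel_measurable borel" and c: "incseq c" "\<And>k. c k > 0"
  shows "log_integral (\<lambda>s. h (c (nat \<lfloor>ln s\<rfloor>) * s)) T \<le> (\<integral>\<^sup>+ u. ennreal (h u / u) *
    indicator (\<Union>k\<le>nat \<lfloor>ln T\<rfloor>. {c k * exp (real k)..<c k * exp (real k + 1)}) u \<partial>lborel)"
proof -
  define K where "K = nat \<lfloor>ln T\<rfloor>"
  define I where "I k = {exp (real k)..<exp (real k + 1)}" for k :: nat
  define D where "D k = {c k * exp (real k)..<c k * exp (real k + 1)}" for k :: nat
  have "log_integral (\<lambda>s. h (c (nat \<lfloor>ln s\<rfloor>) * s)) T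
      \<le> (\<integral>\<^sup>+ s. (\<Sum>k\<le>K. ennreal (h (c k * s) / s) * indicator (I k) s) \<partial>lborel)"
    unfolding log_integral_def
  proof (intro nn_integral_mono)
    fix s :: real
    show "ennreal (h (c (nat \<lfloor>ln s\<rfloor>) * s) / s) * indicator {1..T} s
        \<le> (\<Sum>k\<le>K. ennreal (h (c k * s) / s) * indicator (I k) s)"
    proof (cases "s \<in> {1..T}")
      case True
      have "nat \<lfloor>ln s\<rfloor> \<le> K" unfolding K_def using True by (intro nat_mono floor_mono) auto
      moreover have "s \<in> I (nat \<lfloor>ln s\<rfloor>)" using floor_ln_bounds[of s] True by (auto simp: I_def)
      ultimately show ?thesis using True by (auto intro: member_le_sum[where i="nat \<lfloor>ln s\<rfloor>"])
    qed simp
  qed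
  also have "\<dots> = (\<Sum>k\<le>K. \<integral>\<^sup>+ s. ennreal (h (c k * s) / s) * indicator (I k) s \<partial>lborel)"
    by (rule nn_integral_sum) (auto simp: I_def)
  also have "\<dots> = (\<Sum>k\<le>K. \<integral>\<^sup>+ u. ennreal (h u / u) * indicator (D k) u \<partial>lborel)"
    by (intro sum.cong refl) (simp add: I_def D_def nn_integral_dilation c)
  also have "\<dots> = (\<integral>\<^sup>+ u. ennreal (h u / u) * indicator (\<Union>k\<le>K. D k) u \<partial>lborel)"
    using disjoint_family_on_mono[OF subset_UNIV dilated_blocks_disjoint[OF c]]
    by (subst nn_integral_sum[symmetric])
       (auto simp: D_def indicator_UN_disjoint sum_distrib_left[symmetric])
  finally show ?thesis by (simp add: K_def D_def)
qed

text \<open>The dilated blocks are disjoint subintervals of \<open>[1, c K e^(K+1)]\<close>, so dilating by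
  a blockwise constant factor changes the logarithmic integral by at most \<open>sup h\<close> times the
  logarithmic length of \<open>[T, c K e^(K+1)]\<close>.\<close>
lemma log_integral_blockwise_dilation:
  fixes h :: "real \<Rightarrow> real" and c :: "nat \<Rightarrow> real"
  assumes [measurable]: "h \<in> borel_measurable borel"
    and hb: "\<And>u. u \<ge> 1 \<Longrightarrow> 0 \<le> h u \<and> h u \<le> C"
    and c: "incseq c" "\<And>k. c k \<ge> 1" and T: "T \<ge> 1"
  shows "log_integral (\<lambda>s. h (c (nat \<lfloor>ln s\<rfloor>) * s)) T
    \<le> log_integral h T + ennreal (C * (ln (c (nat \<lfloor>ln T\<rfloor>)) + 1))"
proof -
  define K where "K = nat \<lfloor>ln T\<rfloor>"
  define D where "D k = {c k * exp (real k)..<c k * exp (real k + 1)}" for k :: nat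
  define b where "b = c K * exp (real K + 1)"
  have C: "C \<ge> 0" using hb[of 1] by simp
  have c_pos: "c k > 0" for k using c(2)[of k] by simp
  have D_sub: "D k \<subseteq> {1..b}" if "k \<le> K" for k
  proof -
    have "1 * 1 \<le> c k * exp (real k)" using c(2)[of k] by (intro mult_mono) auto
    moreover have "c k * exp (real k + 1) \<le> b"
      unfolding b_def using that monoD[OF c(1) that] c_pos[of K] by (intro mult_mono) auto
    ultimately show ?thesis by (auto simp: D_def)
  qed
  have "log_integral (\<lambda>s. h (c (nat \<lfloor>ln s\<rfloor>) * s)) T
      \<le> (\<integral>\<^sup>+ u. ennreal (h u / u) * indicator (\<Union>k\<le>K. D k) u \<partial>lborel)"
    unfolding K_def D_def by (rule log_integral_blockwise_dilation_le_union[OF _ c(1) c_pos]) simp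
  also have "\<dots> \<le> (\<integral>\<^sup>+ u. ennreal (h u / u) * indicator {1..T} u
      + ennreal (C / u) * indicator {T..b} u \<partial>lborel)"
  proof (intro nn_integral_mono)
    fix u :: real
    show "ennreal (h u / u) * indicator (\<Union>k\<le>K. D k) u
        \<le> ennreal (h u / u) * indicator {1..T} u + ennreal (C / u) * indicator {T..b} u"
    proof (cases "u \<in> (\<Union>k\<le>K. D k)")
      case True
      hence "u \<in> {1..b}" using D_sub by blast
      hence u: "1 \<le> u" "u \<le> b" by auto
      hence "ennreal (h u / u) \<le> ennreal (C / u)"
        using hb[of u] by (intro ennreal_leI divide_right_mono) auto
      thus ?thesis using True u by (cases "u \<le> T") (auto simp: indicator_def)
    qed simp
  qed
  also have "\<dots> = log_integral h T + ennreal (C * (ln b - ln T))"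
  proof -
    have "T < exp (real K + 1)" using floor_ln_bounds[OF T] by (simp add: K_def)
    also have "exp (real K + 1) \<le> b" using c(2)[of K] by (simp add: b_def)
    finally show ?thesis unfolding log_integral_def using nn_integral_const_div_Icc[of C T b] C T
      by (subst nn_integral_add) auto
  qed
  also have "ln b - ln T \<le> ln (c K) + 1"
  proof -
    have "ln b = ln (c K) + (real K + 1)" using c_pos[of K] by (simp add: b_def ln_mult)
    moreover have "exp (real K) \<le> T" using floor_ln_bounds[OF T] by (simp add: K_def)
    hence "real K \<le> ln T" using T by (simp add: ln_ge_iff)
    ultimately show ?thesis by linarith
  qed
  hence "ennreal (C * (ln b - ln T)) \<le> ennreal (C * (ln (c K) + 1))"
    using C by (intro ennreal_leI mult_left_mono)
  finally show ?thesis by (simp add: K_def add_left_mono)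
qed

section \<open>Distribution functions and rearrangements\<close>

locale bdd_meas_fun =
  fixes x :: "real \<Rightarrow> real"
  assumes bdd_meas: "bdd_meas x"
begin

lemma x_measurable[measurable]: "x \<in> borel_measurable borel"
  using bdd_meas by (simp add: bdd_meas_def)

definition bound :: real where "bound = (SOME B. B \<ge> 0 \<and> (\<forall>s>0. \<bar>x s\<bar> \<le> B))"

lemma bound_nonneg: "bound \<ge> 0" and abs_le_bound: "s > 0 \<Longrightarrow> \<bar>x s\<bar> \<le> bound"
proof -
  obtain C where "\<forall>s>0. \<bar>x s\<bar> \<le> C" using bdd_meas by (auto simp: bdd_meas_def)
  hence "\<exists>B. B \<ge> 0 \<and> (\<forall>s>0. \<bar>x s\<bar> \<le> B)" by (intro exI[of _ "max 0 C"]) auto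
  from someI_ex[OF this] show "bound \<ge> 0" "s > 0 \<Longrightarrow> \<bar>x s\<bar> \<le> bound" by (auto simp: bound_def)
qed

lemma distfun_antimono: "a \<le> b \<Longrightarrow> distfun x b \<le> distfun x a"
  unfolding distfun_def by (intro emeasure_mono) auto

lemma distfun_eq_0:
  assumes "bound \<le> l" shows "distfun x l = 0"
proof -
  have "{s. 0 < s \<and> \<bar>x s\<bar> > l} = {}" using abs_le_bound assms by force
  thus ?thesis unfolding distfun_def by (simp only: emeasure_empty)
qed

lemma distfun_right_continuous: "distfun x v = (SUP k. distfun x (v + 1 / Suc k))"
proof -
  let ?A = "\<lambda>k::nat. {s. 0 < s \<and> \<bar>x s\<bar> > v + 1 / Suc k}"
  have inc: "incseq ?A"
  proof (rule incseq_SucI)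
    fix k :: nat
    have "1 / real (Suc (Suc k)) \<le> 1 / Suc k" by (simp add: frac_le)
    thus "?A k \<subseteq> ?A (Suc k)" by auto
  qed
  have "(\<Union>k. ?A k) = {s. 0 < s \<and> \<bar>x s\<bar> > v}"
  proof safe
    fix s assume s: "0 < s" "\<bar>x s\<bar> > v"
    obtain k :: nat where "1 / Suc k < \<bar>x s\<bar> - v" using s by (metis diff_gt_0_iff_gt nat_approx_posE)
    hence "s \<in> ?A k" using s by simp
    thus "s \<in> (\<Union>k. ?A k)" by blast
  next
    fix s k assume "\<bar>x s\<bar> > v + 1 / Suc k"
    moreover have "1 / real (Suc k) > 0" by simp
    ultimately show "\<bar>x s\<bar> > v" by linarith
  qed
  moreover have "(SUP k. emeasure lborel (?A k)) = emeasure lborel (\<Union>k. ?A k)"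
    by (rule SUP_emeasure_incseq[OF _ inc]) auto
  ultimately show ?thesis by (simp add: distfun_def)
qed

lemma bound_in_rearr_set: "bound \<in> {l. 0 \<le> l \<and> distfun x l \<le> ennreal t}"
  using bound_nonneg distfun_eq_0[of bound] by auto

lemma rearr_nonneg: "0 \<le> rearr x t"
  unfolding rearr_def using bound_in_rearr_set by (intro cInf_greatest) auto

lemma rearr_le_bound: "rearr x t \<le> bound"
  unfolding rearr_def using bound_in_rearr_set by (intro cInf_lower) auto

lemma rearr_antimono:
  assumes "s \<le> t" shows "rearr x t \<le> rearr x s"
proof -
  have "{l. 0 \<le> l \<and> distfun x l \<le> ennreal s} \<subseteq> {l. 0 \<le> l \<and> distfun x l \<le> ennreal t}"
    using assms by (auto intro: order_trans ennreal_leI)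
  moreover have "bdd_below {l. 0 \<le> l \<and> distfun x l \<le> ennreal t}" by (rule bdd_belowI[of _ 0]) auto
  ultimately show ?thesis
    unfolding rearr_def using bound_in_rearr_set by (intro cInf_superset_mono) auto
qed

lemma rearr_measurable[measurable]: "rearr x \<in> borel_measurable borel"
proof -
  have "(\<lambda>t. - rearr x t) \<in> borel_measurable borel"
    by (rule borel_measurable_mono) (auto simp: mono_def rearr_antimono)
  hence "(\<lambda>t. - (- rearr x t)) \<in> borel_measurable borel" by measurable
  thus ?thesis by simp
qed

lemma less_rearr_iff:
  assumes "0 \<le> v" shows "v < rearr x s \<longleftrightarrow> ennreal s < distfun x v"
proof
  assume "ennreal s < distfun x v"
  show "v < rearr x s"
  proof (rule ccontr)
    assume "\<not> v < rearr x s"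
    have "distfun x (v + 1 / Suc k) \<le> ennreal s" for k :: nat
    proof -
      have "Inf {l. 0 \<le> l \<and> distfun x l \<le> ennreal s} < v + 1 / Suc k"
        using \<open>\<not> v < rearr x s\<close> unfolding rearr_def
        by (smt (verit) of_nat_0_less_iff divide_pos_pos zero_less_Suc)
      then obtain l where "0 \<le> l" "distfun x l \<le> ennreal s" "l < v + 1 / Suc k"
        using cInf_lessD[of "{l. 0 \<le> l \<and> distfun x l \<le> ennreal s}"] bound_in_rearr_set by blast
      thus ?thesis using distfun_antimono[of l "v + 1 / Suc k"] by simp
    qed
    hence "distfun x v \<le> ennreal s" by (subst distfun_right_continuous) (rule SUP_least)
    thus False using \<open>ennreal s < distfun x v\<close> by simp
  qed
next
  assume "v < rearr x s"
  show "ennreal s < distfun x v"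
  proof (rule ccontr)
    assume "\<not> ennreal s < distfun x v"
    hence "rearr x s \<le> v" unfolding rearr_def using assms by (intro cInf_lower) (auto simp: not_less)
    thus False using \<open>v < rearr x s\<close> by simp
  qed
qed

definition Fx :: "real \<Rightarrow> real" where "Fx t = (LBINT s:{0..t}. rearr x s)"

lemma nn_integral_rearr: "(\<integral>\<^sup>+ s. ennreal (rearr x s) * indicator {0..t} s \<partial>lborel) = ennreal (Fx t)"
proof -
  have "integrable lborel (\<lambda>s. indicator {0..t} s *\<^sub>R rearr x s)"
    by (rule integrableI_bounded_set_indicator[where B=bound])
       (auto simp: rearr_le_bound rearr_nonneg emeasure_lborel_Icc_eq)
  from nn_integral_eq_integral[OF this]
  have "(\<integral>\<^sup>+ s. ennreal (indicator {0..t} s *\<^sub>R rearr x s) \<partial>lborel) = ennreal (Fx t)"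
    by (simp add: Fx_def set_lebesgue_integral_def rearr_nonneg)
  moreover have "(\<integral>\<^sup>+ s. ennreal (rearr x s) * indicator {0..t} s \<partial>lborel)
      = (\<integral>\<^sup>+ s. ennreal (indicator {0..t} s *\<^sub>R rearr x s) \<partial>lborel)"
    by (intro nn_integral_cong) (auto split: split_indicator)
  ultimately show ?thesis by simp
qed

lemma Fx_nonneg[simp]: "0 \<le> Fx t"
  unfolding Fx_def set_lebesgue_integral_def by (intro integral_nonneg_AE) (auto simp: rearr_nonneg)

lemma Fx_mono: "a \<le> b \<Longrightarrow> Fx a \<le> Fx b"
proof -
  assume "a \<le> b"
  hence "(\<integral>\<^sup>+ s. ennreal (rearr x s) * indicator {0..a} s \<partial>lborel)
      \<le> (\<integral>\<^sup>+ s. ennreal (rearr x s) * indicator {0..b} s \<partial>lborel)"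
    by (intro nn_integral_mono) (auto split: split_indicator)
  thus ?thesis by (simp add: nn_integral_rearr)
qed

lemma nn_integral_rearr_ge:
  assumes "0 \<le> a" "a \<le> b" "b \<le> t" "0 \<le> c" "\<And>s. a \<le> s \<Longrightarrow> s < b \<Longrightarrow> c \<le> rearr x s"
  shows "c * (b - a) \<le> Fx t"
proof -
  have "ennreal (c * (b - a)) = (\<integral>\<^sup>+ s. ennreal c * indicator {a..<b} s \<partial>lborel)"
    using assms by (simp add: nn_integral_cmult_indicator emeasure_lborel_Ico ennreal_mult)
  also have "\<dots> \<le> ennreal (Fx t)" unfolding nn_integral_rearr[symmetric]
    using assms by (intro nn_integral_mono) (auto split: split_indicator intro: ennreal_leI)
  finally show ?thesis by (simp add: ennreal_le_iff)
qed

end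

section \<open>Elements of \<open>M\<^sub>\<psi>\<close> and the Stieltjes integral\<close>

lemma finite_measure_interval_measure:
  fixes G :: "real \<Rightarrow> real"
  assumes G: "mono G" "\<And>a. continuous (at_right a) G" and bnd: "\<And>l. \<bar>G l\<bar> \<le> B"
  shows "finite_measure (interval_measure G)"
proof (rule finite_measureI)
  let ?\<mu> = "interval_measure G"
  have "(\<Union>k::nat. {- real k<..real k}) = UNIV"
  proof safe
    fix y :: real
    obtain k :: nat where "\<bar>y\<bar> < real k" using reals_Archimedean2 by blast
    hence "y \<in> {- real k<..real k}" by auto
    thus "y \<in> (\<Union>k. {- real k<..real k})" by blast
  qed simp
  hence "emeasure ?\<mu> (space ?\<mu>) = emeasure ?\<mu> (\<Union>k::nat. {- real k<..real k})" by simp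
  also have "\<dots> = (SUP k. emeasure ?\<mu> {- real k<..real k})"
    by (rule SUP_emeasure_incseq[symmetric]) (auto simp: incseq_def)
  also have "\<dots> \<le> ennreal (2 * B)"
  proof (rule SUP_least)
    fix k :: nat
    have "emeasure ?\<mu> {- real k<..real k} = ennreal (G k - G (- real k))"
      using G by (intro emeasure_interval_measure_Ioc) (auto simp: mono_def)
    also have "\<dots> \<le> ennreal (2 * B)" using bnd[of k] bnd[of "- real k"] by (intro ennreal_leI) linarith
    finally show "emeasure ?\<mu> {- real k<..real k} \<le> ennreal (2 * B)" .
  qed
  finally show "emeasure ?\<mu> (space ?\<mu>) \<noteq> \<infinity>" by (auto simp: top_unique)
qed

lemma emeasure_interval_measure_Ioi:
  fixes G :: "real \<Rightarrow> real"
  assumes G: "mono G" "\<And>a. continuous (at_right a) G" and lim: "(G \<longlongrightarrow> L) at_top"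
  shows "emeasure (interval_measure G) {a<..} = ennreal (L - G a)"
proof -
  let ?\<mu> = "interval_measure G"
  have "(\<Union>k::nat. {a<..a + real k}) = {a<..}"
  proof safe
    fix y assume "a < y"
    obtain k :: nat where "y - a < real k" using reals_Archimedean2 by blast
    hence "y \<in> {a<..a + real k}" using \<open>a < y\<close> by auto
    thus "y \<in> (\<Union>k. {a<..a + real k})" by blast
  qed auto
  hence "emeasure ?\<mu> {a<..} = emeasure ?\<mu> (\<Union>k::nat. {a<..a + real k})" by simp
  also have "\<dots> = (SUP k::nat. emeasure ?\<mu> {a<..a + real k})"
    by (rule SUP_emeasure_incseq[symmetric]) (auto simp: incseq_def)
  also have "\<dots> = (SUP k::nat. ennreal (G (a + real k) - G a))"
    using G by (intro SUP_cong refl emeasure_interval_measure_Ioc) (auto simp: mono_def)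
  also have "\<dots> = ennreal (L - G a)"
  proof (rule LIMSEQ_unique[OF LIMSEQ_SUP])
    show "incseq (\<lambda>k::nat. ennreal (G (a + real k) - G a))"
      using G(1) by (auto simp: incseq_def mono_def intro!: ennreal_leI)
    have "(\<lambda>k::nat. G (a + real k)) \<longlonglongrightarrow> L"
      by (rule filterlim_compose[OF lim]) (rule filterlim_tendsto_add_at_top[OF tendsto_const filterlim_real_sequentially])
    thus "(\<lambda>k::nat. ennreal (G (a + real k) - G a)) \<longlonglongrightarrow> ennreal (L - G a)"
      by (intro tendsto_ennrealI tendsto_diff tendsto_const)
  qed
  finally show ?thesis .
qed

lemma nn_integral_Ioi_eq_tail_integral:
  fixes \<mu> :: "real measure"
  assumes "sigma_finite_measure \<mu>" and sets_\<mu>[measurable_cong]: "sets \<mu> = sets borel" and "z \<ge> 0"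
  shows "(\<integral>\<^sup>+ u. ennreal u * indicator {z<..} u \<partial>\<mu>)
    = (\<integral>\<^sup>+ v. emeasure \<mu> {max v z<..} * indicator {0..} v \<partial>lborel)"
proof -
  interpret pair_sigma_finite \<mu> lborel
    using assms(1) by (rule pair_sigma_finite.intro) unfold_locales
  let ?f = "\<lambda>u v. (indicator {0..<u} v * indicator {z<..} u :: ennreal)"
  have "(\<lambda>p. if 0 \<le> snd p \<and> snd p < fst p \<and> z < fst p then 1 else 0 :: ennreal)
      \<in> borel_measurable (\<mu> \<Otimes>\<^sub>M lborel)" by measurable
  hence f_meas: "(\<lambda>(u, v). ?f u v) \<in> borel_measurable (\<mu> \<Otimes>\<^sub>M lborel)"
    by (rule measurable_cong[THEN iffD1, rotated]) (auto split: split_indicator)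
  have "(\<integral>\<^sup>+ u. ennreal u * indicator {z<..} u \<partial>\<mu>) = (\<integral>\<^sup>+ u. (\<integral>\<^sup>+ v. ?f u v \<partial>lborel) \<partial>\<mu>)"
    using \<open>z \<ge> 0\<close> by (intro nn_integral_cong) (auto simp: nn_integral_multc emeasure_lborel_Ico split: split_indicator)
  also have "\<dots> = (\<integral>\<^sup>+ v. (\<integral>\<^sup>+ u. ?f u v \<partial>\<mu>) \<partial>lborel)"
    by (rule Fubini'[OF f_meas, symmetric])
  also have "\<dots> = (\<integral>\<^sup>+ v. emeasure \<mu> {max v z<..} * indicator {0..} v \<partial>lborel)"
  proof (intro nn_integral_cong)
    fix v :: real
    have "(\<integral>\<^sup>+ u. ?f u v \<partial>\<mu>) = (\<integral>\<^sup>+ u. indicator {max v z<..} u * indicator {0..} v \<partial>\<mu>)"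
      by (intro nn_integral_cong) (auto split: split_indicator)
    also have "\<dots> = emeasure \<mu> {max v z<..} * indicator {0..} v"
      by (subst nn_integral_multc) auto
    finally show "(\<integral>\<^sup>+ u. ?f u v \<partial>\<mu>) = emeasure \<mu> {max v z<..} * indicator {0..} v" .
  qed
  finally show ?thesis .
qed

locale M_psi_fun = Psi_function +
  fixes x :: "real \<Rightarrow> real"
  assumes in_M_psi: "x \<in> M_psi \<psi>"

sublocale M_psi_fun \<subseteq> bdd_meas_fun x
  using in_M_psi by unfold_locales (simp add: M_psi_def)

context M_psi_fun
begin

lemma Fx_le_psi: "\<exists>C\<ge>1. \<forall>t>0. Fx t \<le> C * \<psi> t"
proof -
  obtain C where C: "\<forall>t>0. Fx t / \<psi> t \<le> C" using in_M_psi by (auto simp: M_psi_def Fx_def)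
  have "Fx t \<le> max 1 C * \<psi> t" if "t > 0" for t
  proof -
    have "Fx t \<le> C * \<psi> t" using C that psi_pos[OF that] by (auto simp: field_simps)
    also have "\<dots> \<le> max 1 C * \<psi> t" using psi_pos[OF that] by (intro mult_right_mono) auto
    finally show ?thesis .
  qed
  thus ?thesis by (intro exI[of _ "max 1 C"]) auto
qed

text \<open>Otherwise \<open>x\<^sup>* \<ge> v\<close> everywhere and \<open>Fx t \<ge> v t\<close>, contradicting \<open>Fx = O(\<psi>) = o(t)\<close>.\<close>
lemma distfun_finite:
  assumes v: "v > 0" shows "distfun x v < \<infinity>"
proof (rule ccontr)
  assume "\<not> distfun x v < \<infinity>"
  hence "distfun x v = \<infinity>" by (simp add: less_top[symmetric])
  hence low: "v * t \<le> Fx t" if "t > 0" for t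
    using nn_integral_rearr_ge[of 0 t t v] less_rearr_iff[of v] v that by (simp add: less_imp_le)
  obtain C where C: "C \<ge> 1" "\<And>t. t > 0 \<Longrightarrow> Fx t \<le> C * \<psi> t" using Fx_le_psi by auto
  have "v / (2 * C) > 0" using v C by simp
  hence "eventually (\<lambda>t. norm (\<psi> t) \<le> (v / (2 * C)) * norm t) at_top"
    using smallo_at_top unfolding smallo_def by blast
  hence "eventually (\<lambda>t. norm (\<psi> t) \<le> (v / (2 * C)) * norm t \<and> t > 0) at_top"
    using eventually_gt_at_top[of 0] by (rule eventually_conj)
  then obtain t where t: "norm (\<psi> t) \<le> (v / (2 * C)) * norm t" "t > 0"
    by (auto dest: eventually_happens)
  have "v * t \<le> C * \<psi> t" using low[OF t(2)] C(2)[OF t(2)] by linarith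
  also have "\<dots> \<le> C * ((v / (2 * C)) * t)"
    using t C psi_pos[OF t(2)] by (intro mult_left_mono) auto
  also have "\<dots> = v * t / 2" using C by (simp add: field_simps)
  finally show False using v t by simp
qed

definition nx :: "real \<Rightarrow> real" where "nx v = enn2real (distfun x v)"

lemma distfun_eq_nx: "v > 0 \<Longrightarrow> distfun x v = ennreal (nx v)"
  using distfun_finite[of v] by (simp add: nx_def ennreal_enn2real_if)

lemma nx_nonneg: "0 \<le> nx v" by (simp add: nx_def)

lemma nx_antimono: "0 < a \<Longrightarrow> a \<le> b \<Longrightarrow> nx b \<le> nx a"
  using distfun_antimono[of a b] distfun_eq_nx[of a] distfun_eq_nx[of b]
  by (simp add: ennreal_le_iff nx_nonneg)

lemma nx_eq_0: "bound \<le> l \<Longrightarrow> nx l = 0"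
  by (simp add: nx_def distfun_eq_0)

lemma less_rearr_iff_nx: "0 < v \<Longrightarrow> 0 \<le> s \<Longrightarrow> v < rearr x s \<longleftrightarrow> s < nx v"
  using less_rearr_iff[of v s] by (simp add: distfun_eq_nx ennreal_less_iff)

lemma nx_right_continuous:
  assumes a: "a > 0" shows "(\<lambda>k. nx (a + 1 / Suc k)) \<longlonglongrightarrow> nx a"
proof -
  have "incseq (\<lambda>k. distfun x (a + 1 / Suc k))"
    by (intro incseq_SucI distfun_antimono) (simp add: frac_le)
  from LIMSEQ_SUP[OF this]
  have "(\<lambda>k. distfun x (a + 1 / Suc k)) \<longlonglongrightarrow> ennreal (nx a)"
    using distfun_right_continuous[of a] distfun_eq_nx[OF a] by simp
  from tendsto_enn2real[OF this] show ?thesis by (simp add: nx_def)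
qed

lemma Fx_nx_ge: "v > 0 \<Longrightarrow> v * nx v \<le> Fx (nx v)"
  using nn_integral_rearr_ge[of 0 "nx v" "nx v" v] less_rearr_iff_nx[of v] nx_nonneg[of v]
  by (simp add: less_imp_le)

lemma Fx_le_Fx_nx:
  assumes v: "v > 0" and t: "0 \<le> t"
  shows "Fx t \<le> Fx (nx v) + v * max 0 (t - nx v)"
proof -
  let ?T = "nx v"
  have "ennreal (Fx t) \<le> (\<integral>\<^sup>+ s. ennreal (rearr x s) * indicator {0..?T} s
      + ennreal v * indicator {?T<..t} s \<partial>lborel)"
    unfolding nn_integral_rearr[symmetric]
  proof (intro nn_integral_mono)
    fix s
    have "rearr x s \<le> v" if "0 \<le> s" "?T < s" using less_rearr_iff_nx[of v s] v that by auto
    thus "ennreal (rearr x s) * indicator {0..t} s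
        \<le> ennreal (rearr x s) * indicator {0..?T} s + ennreal v * indicator {?T<..t} s"
      by (auto split: split_indicator intro: ennreal_leI)
  qed
  also have "\<dots> = ennreal (Fx ?T) + ennreal v * emeasure lborel {?T<..t}"
    by (subst nn_integral_add) (auto simp: nn_integral_cmult_indicator nn_integral_rearr)
  also have "emeasure lborel {?T<..t} = ennreal (max 0 (t - ?T))"
    by (cases "?T \<le> t") (auto simp: emeasure_lborel_Ioc max_def)
  finally show ?thesis using v by (simp add: ennreal_mult'[symmetric] ennreal_plus[symmetric] ennreal_le_iff del: ennreal_plus)
qed

lemma emeasure_superlevel_rearr:
  assumes z: "z > 0" and v: "0 \<le> v"
  shows "emeasure lborel {s. 0 \<le> s \<and> s \<le> nx z \<and> v < rearr x s} = ennreal (nx (max v z))"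
proof (cases "v < z")
  case True
  let ?S = "{s. 0 \<le> s \<and> s \<le> nx z \<and> v < rearr x s}"
  have "v < rearr x s" if "0 \<le> s" "s < nx z" for s
  proof -
    have "ennreal s < ennreal (nx z)" using that by (simp add: ennreal_less_iff)
    also have "\<dots> \<le> distfun x v" using distfun_eq_nx[OF z] distfun_antimono[of v z] True by simp
    finally show ?thesis using less_rearr_iff[OF v] by simp
  qed
  hence "{0..<nx z} \<subseteq> ?S" by auto
  hence "emeasure lborel {0..<nx z} \<le> emeasure lborel ?S" by (rule emeasure_mono) measurable
  moreover have "emeasure lborel ?S \<le> emeasure lborel {0..nx z}" by (rule emeasure_mono) auto
  ultimately show ?thesis using True nx_nonneg[of z] by (simp add: emeasure_lborel_Ico max_def)
next
  case False
  hence "nx v \<le> nx z" using z by (intro nx_antimono) auto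
  moreover have "v < rearr x s \<longleftrightarrow> s < nx v" if "0 \<le> s" for s
    using False z that by (intro less_rearr_iff_nx) auto
  ultimately have "{s. 0 \<le> s \<and> s \<le> nx z \<and> v < rearr x s} = {0..<nx v}" by fastforce
  thus ?thesis using False nx_nonneg[of v] by (simp add: emeasure_lborel_Ico)
qed

text \<open>Both sides of the Stieltjes identity below equal this layer-cake integral.\<close>
lemma Fx_nx_layer_cake:
  assumes z: "z > 0"
  shows "ennreal (Fx (nx z)) = (\<integral>\<^sup>+ v. ennreal (nx (max v z)) * indicator {0..} v \<partial>lborel)"
proof -
  let ?f = "\<lambda>s v. (indicator {0..<rearr x s} v * indicator {0..nx z} s :: ennreal)"
  have "(\<lambda>p. if 0 \<le> snd p \<and> snd p < rearr x (fst p) \<and> 0 \<le> fst p \<and> fst p \<le> nx z then 1 else 0 :: ennreal)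
      \<in> borel_measurable (lborel \<Otimes>\<^sub>M lborel)" by measurable
  hence f_meas: "(\<lambda>(s, v). ?f s v) \<in> borel_measurable (lborel \<Otimes>\<^sub>M lborel)"
    by (rule measurable_cong[THEN iffD1, rotated]) (auto split: split_indicator)
  have "ennreal (Fx (nx z)) = (\<integral>\<^sup>+ s. (\<integral>\<^sup>+ v. ?f s v \<partial>lborel) \<partial>lborel)"
    unfolding nn_integral_rearr[symmetric]
    by (intro nn_integral_cong) (simp add: nn_integral_multc emeasure_lborel_Ico rearr_nonneg)
  also have "\<dots> = (\<integral>\<^sup>+ v. (\<integral>\<^sup>+ s. ?f s v \<partial>lborel) \<partial>lborel)"
    by (rule lborel_pair.Fubini'[OF f_meas, symmetric])
  also have "\<dots> = (\<integral>\<^sup>+ v. ennreal (nx (max v z)) * indicator {0..} v \<partial>lborel)"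
  proof (intro nn_integral_cong)
    fix v :: real
    show "(\<integral>\<^sup>+ s. ?f s v \<partial>lborel) = ennreal (nx (max v z)) * indicator {0..} v"
    proof (cases "0 \<le> v")
      case True
      let ?S = "{s. 0 \<le> s \<and> s \<le> nx z \<and> v < rearr x s}"
      have "(\<integral>\<^sup>+ s. ?f s v \<partial>lborel) = (\<integral>\<^sup>+ s. indicator ?S s \<partial>lborel)"
        using True by (intro nn_integral_cong) (auto split: split_indicator)
      also have "\<dots> = emeasure lborel ?S" by (intro nn_integral_indicator) measurable
      finally show ?thesis using True emeasure_superlevel_rearr[OF z True] by simp
    qed (simp add: indicator_def)
  qed
  finally show ?thesis .
qed

lemma nx_max_right_continuous:
  assumes z: "z > 0" shows "continuous (at_right a) (\<lambda>l. - nx (max l z))"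
proof (subst continuous_at_right_real_increasing)
  show "- nx (max u z) \<le> - nx (max w z)" if "u \<le> w" for u w
    using z that by (auto intro!: nx_antimono)
  show "\<forall>\<epsilon>>0. \<exists>\<delta>>0. - nx (max (a + \<delta>) z) - - nx (max a z) < \<epsilon>"
  proof (intro allI impI)
    fix \<epsilon> :: real assume e: "\<epsilon> > 0"
    show "\<exists>\<delta>>0. - nx (max (a + \<delta>) z) - - nx (max a z) < \<epsilon>"
    proof (cases "a < z")
      case True
      thus ?thesis using e by (intro exI[of _ "z - a"]) (simp add: max_def)
    next
      case False
      with z have a: "a > 0" by simp
      from nx_right_continuous[OF a] obtain k where k: "\<bar>nx (a + 1 / Suc k) - nx a\<bar> < \<epsilon>"
        using e by (auto simp: LIMSEQ_def dist_real_def)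
      have "max (a + 1 / Suc k) z = a + 1 / Suc k" "max a z = a" using False
        by (smt (verit) of_nat_0_less_iff divide_pos_pos zero_less_Suc)+
      thus ?thesis using k by (intro exI[of _ "1 / Suc k"]) auto
    qed
  qed
qed

lemma stieltjes_tail_eq:
  assumes z: "z > 0" shows "stieltjes_tail x z = Fx (nx z)"
proof -
  define G where "G l = - nx (max l z)" for l
  have G_mono: "mono G" unfolding G_def mono_def using z by (auto intro!: nx_antimono)
  have G_rc: "continuous (at_right a) G" for a
    unfolding G_def[abs_def] by (rule nx_max_right_continuous[OF z])
  have "eventually (\<lambda>l. G l = 0) at_top"
    using eventually_ge_at_top[of "max bound z"] by eventually_elim (simp add: G_def nx_eq_0)
  hence G_lim: "(G \<longlongrightarrow> 0) at_top" by (rule tendsto_eventually)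
  have "\<bar>G l\<bar> \<le> nx z" for l using z nx_antimono[of z "max l z"] nx_nonneg by (simp add: G_def)
  then interpret fin: finite_measure "interval_measure G"
    by (intro finite_measure_interval_measure G_mono G_rc)
  have tail: "emeasure (interval_measure G) {max v z<..} = ennreal (nx (max v z))" for v
    using emeasure_interval_measure_Ioi[OF G_mono G_rc G_lim] by (simp add: G_def)
  have "stieltjes_tail x z = enn2real (\<integral>\<^sup>+ u. ennreal u * indicator {z<..} u \<partial>interval_measure G)"
    by (simp add: stieltjes_tail_def G_def[abs_def] nx_def)
  also have "\<dots> = enn2real (\<integral>\<^sup>+ v. ennreal (nx (max v z)) * indicator {0..} v \<partial>lborel)"
    using z by (simp add: nn_integral_Ioi_eq_tail_integral[OF fin.sigma_finite_measure_axioms] tail)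
  also have "\<dots> = Fx (nx z)" by (simp add: Fx_nx_layer_cake[OF z, symmetric])
  finally show ?thesis .
qed

end

section \<open>Comparing the two logarithmic means\<close>

locale log_mean_comparison = slowly_varying_Psi +
  fixes F N :: "real \<Rightarrow> real" and C :: real
  assumes C: "C \<ge> 1"
    and F_mono: "mono F" and N_mono: "mono N"
    and F_nonneg: "\<And>t. 0 \<le> F t"
    and F_le_psi: "\<And>t. t > 0 \<Longrightarrow> F t \<le> C * \<psi> t"
    and N_nonneg: "\<And>t. t \<ge> 1 \<Longrightarrow> 0 \<le> N t"
    and F_N_ge: "\<And>t. t \<ge> 1 \<Longrightarrow> N t / t \<le> F (N t)"
    and F_le_F_N: "\<And>t. t \<ge> 1 \<Longrightarrow> F t \<le> F (N t) + max 0 (t - N t) / t"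
begin

lemma F_measurable[measurable]: "F \<in> borel_measurable borel"
  and N_measurable[measurable]: "N \<in> borel_measurable borel"
  using F_mono N_mono by (auto intro: borel_measurable_mono)

text \<open>\<open>\<psi>\<close> modified below \<open>1\<close> to be monotone, hence measurable, and positive on the whole
  line; \<open>Mop\<close> only sees values on \<open>[1, \<infinity>)\<close>, where it agrees with \<open>\<psi>\<close>.\<close>
definition psi1 :: "real \<Rightarrow> real" where "psi1 s = \<psi> (max 1 s)"

lemma psi1_pos: "psi1 s > 0" by (simp add: psi1_def psi_pos)
lemma psi1_eq: "s \<ge> 1 \<Longrightarrow> psi1 s = \<psi> s" by (simp add: psi1_def)
lemma psi1_mono: "a \<le> b \<Longrightarrow> psi1 a \<le> psi1 b" unfolding psi1_def by (intro psi_mono) auto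
lemma psi1_measurable[measurable]: "psi1 \<in> borel_measurable borel"
  by (rule borel_measurable_mono) (auto simp: mono_def psi1_mono)

definition f :: "real \<Rightarrow> real" where "f s = F s / psi1 s"
definition g :: "real \<Rightarrow> real" where "g s = F (N s) / psi1 s"

lemma f_measurable[measurable]: "f \<in> borel_measurable borel" unfolding f_def by measurable
lemma g_measurable[measurable]: "g \<in> borel_measurable borel" unfolding g_def by measurable

lemma f_nonneg: "0 \<le> f s" and f_le: "f s \<le> C"
proof -
  show "0 \<le> f s" using F_nonneg[of s] psi1_pos[of s] by (simp add: f_def)
  have "F s \<le> F (max 1 s)" using F_mono by (simp add: mono_def)
  also have "\<dots> \<le> C * psi1 s" using F_le_psi[of "max 1 s"] by (simp add: psi1_def)
  finally show "f s \<le> C" using psi1_pos by (simp add: f_def divide_le_eq)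
qed

lemma g_nonneg: "0 \<le> g s" using F_nonneg[of "N s"] psi1_pos[of s] by (simp add: g_def)

lemma f_le_g: "t \<ge> 1 \<Longrightarrow> f t \<le> g t + 1 / psi1 t"
proof -
  assume t: "t \<ge> 1"
  have "max 0 (t - N t) / t \<le> 1" using N_nonneg[OF t] t by (auto simp: divide_le_eq)
  hence "F t \<le> F (N t) + 1" using F_le_F_N[OF t] by linarith
  hence "F t / psi1 t \<le> (F (N t) + 1) / psi1 t" using psi1_pos[of t] by (intro divide_right_mono) auto
  thus ?thesis by (simp add: f_def g_def add_divide_distrib)
qed

text \<open>Concavity of \<open>\<psi>\<close> and \<open>F \<le> C \<psi>\<close> force \<open>N t\<close> to be small: if \<open>N t > L\<close> then
  \<open>N t \<le> C t \<psi> (N t) \<le> C t \<psi> L N t / L\<close>, i.e. \<open>\<psi> L \<ge> 2 \<psi> (C t)\<close>, which the slow variation of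
  \<open>\<psi>\<close> rules out.\<close>
lemma N_le_max:
  assumes t: "t \<ge> 1" and slow_t: "\<psi> (2 * C * t * \<psi> (2 * C * t)) < 3 / 2 * \<psi> t"
  shows "N t \<le> max t (2 * C * t * \<psi> (C * t))"
proof (rule ccontr)
  define L where "L = 2 * C * t * \<psi> (C * t)"
  have Ct: "C * t \<ge> t" using C t by simp
  have psi_Ct: "\<psi> (C * t) > 0" using Ct t by (intro psi_pos) simp
  have L: "L > 0" using C t psi_Ct by (simp add: L_def)
  assume "\<not> N t \<le> max t L"
  hence NL: "N t > t" "N t > L" by auto
  have N_pos: "N t > 0" using NL t by simp
  have "N t / t \<le> C * \<psi> (N t)" using F_N_ge[OF t] F_le_psi[OF N_pos] by linarith
  hence up: "N t \<le> C * t * \<psi> (N t)" using t by (simp add: divide_le_eq mult.commute mult.left_commute)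
  have "\<psi> L \<le> \<psi> (2 * C * t * \<psi> (2 * C * t))"
  proof (rule psi_mono)
    have "\<psi> (C * t) \<le> \<psi> (2 * C * t)" using Ct t by (intro psi_mono) auto
    thus "L \<le> 2 * C * t * \<psi> (2 * C * t)" unfolding L_def using C t by (intro mult_left_mono) auto
  qed (use L in simp)
  also have "\<dots> < 3 / 2 * \<psi> t" by (rule slow_t)
  also have "\<dots> \<le> 3 / 2 * \<psi> (C * t)" using Ct t by (simp add: psi_mono)
  finally have "\<psi> L < 3 / 2 * \<psi> (C * t)" .
  with psi_mult_le[OF L] NL N_pos have "L * \<psi> (N t) < N t * (3 / 2 * \<psi> (C * t))"
    by (smt (verit) mult_strict_left_mono)
  hence "2 * C * t * \<psi> (N t) < 3 / 2 * N t" using psi_Ct by (simp add: L_def algebra_simps)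
  moreover have "C * t * \<psi> (N t) > 0" using C t psi_pos[OF N_pos] by simp
  ultimately show False using up by linarith
qed

text \<open>Constant on each block \<open>[e^k, e^(k+1))\<close> and at least \<open>2 C \<psi> (C t)\<close> there.\<close>
definition block_factor :: "nat \<Rightarrow> real" where
  "block_factor k = max 1 (2 * C * psi1 (C * exp (real k + 1)))"

abbreviation factor :: "real \<Rightarrow> real" where "factor t \<equiv> block_factor (nat \<lfloor>ln t\<rfloor>)"

lemma block_factor_ge_1: "block_factor k \<ge> 1" by (simp add: block_factor_def)

lemma block_factor_incseq: "incseq block_factor"
proof (rule incseq_SucI)
  fix k
  have "psi1 (C * exp (real k + 1)) \<le> psi1 (C * exp (real (Suc k) + 1))" using C by (intro psi1_mono) simp
  thus "block_factor k \<le> block_factor (Suc k)"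
    unfolding block_factor_def using C by (intro max.mono order_refl mult_left_mono) auto
qed

lemma factor_measurable[measurable]: "factor \<in> borel_measurable borel"
  by measurable

lemma psi1_block_le:
  assumes t: "t \<ge> 1" shows "psi1 (C * exp (real (nat \<lfloor>ln t\<rfloor>) + 1)) \<le> \<psi> (C * exp 1 * t)"
proof -
  have "1 * 1 \<le> C * exp 1" using C by (intro mult_mono) auto
  hence "1 * 1 \<le> (C * exp 1) * t" using t by (intro mult_mono) auto
  moreover have "exp (real (nat \<lfloor>ln t\<rfloor>) + 1) \<le> exp 1 * t"
    using floor_ln_bounds(1)[OF t] by (simp add: exp_add)
  ultimately show ?thesis
    using C by (simp add: psi1_def mult.assoc mult_left_mono psi_mono)
qed

lemma factor_le:
  assumes "t \<ge> 1" "\<psi> (C * exp 1 * t) \<ge> 1" shows "factor t \<le> 2 * C * \<psi> (C * exp 1 * t)"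
  using psi1_block_le[OF assms(1)] assms(2) C unfolding block_factor_def
  by (auto intro!: mult_left_mono order_trans[of 1 "\<psi> (C * exp 1 * t)"] simp: mult_le_cancel_right1)

lemma factor_ge:
  assumes t: "t \<ge> 1" shows "2 * C * \<psi> (C * t) \<le> factor t"
proof -
  have "C * t \<ge> 1" using C t by (metis mult_mono' mult_1_right order_trans zero_le_one)
  moreover have "C * t \<le> C * exp (real (nat \<lfloor>ln t\<rfloor>) + 1)"
    using floor_ln_bounds(2)[OF t] C by simp
  ultimately have "\<psi> (C * t) \<le> psi1 (C * exp (real (nat \<lfloor>ln t\<rfloor>) + 1))"
    unfolding psi1_def by (intro psi_mono) auto
  hence "2 * C * \<psi> (C * t) \<le> 2 * C * psi1 (C * exp (real (nat \<lfloor>ln t\<rfloor>) + 1))"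
    using C by (intro mult_left_mono) auto
  thus ?thesis by (simp add: block_factor_def le_max_iff_disj)
qed

lemma eventually_N_le_factor: "eventually (\<lambda>t. N t \<le> factor t * t) at_top"
proof -
  have "eventually (\<lambda>t. \<psi> (2 * C * t * \<psi> (2 * C * t)) / \<psi> t < 3 / 2) at_top"
    using psi_dilated_slow_ratio[of "2 * C"] C by (intro order_tendstoD) auto
  thus ?thesis using eventually_ge_at_top[of 1]
  proof eventually_elim
    case (elim t)
    hence "N t \<le> max t (2 * C * t * \<psi> (C * t))"
      using psi_pos[of t] by (intro N_le_max) (auto simp: divide_less_eq mult.commute)
    also have "\<dots> \<le> factor t * t"
      using factor_ge[of t] block_factor_ge_1[of "nat \<lfloor>ln t\<rfloor>"] elim
      by (auto simp: mult.commute mult.left_commute mult_right_mono)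
    finally show ?case .
  qed
qed

lemma psi1_factor_ratio: "((\<lambda>t. psi1 (factor t * t) / psi1 t) \<longlongrightarrow> 1) at_top"
proof -
  define K where "K = 2 * C * exp 1"
  have K: "K \<ge> 1" using C by (simp add: K_def) (smt (verit) mult_less_cancel_right1 one_le_exp_iff)
  show ?thesis
  proof (rule tendsto_sandwich[OF _ _ tendsto_const psi_dilated_slow_ratio[OF K]])
    show "\<forall>\<^sub>F t in at_top. 1 \<le> psi1 (factor t * t) / psi1 t"
      using eventually_ge_at_top[of 1]
    proof eventually_elim
      case (elim t)
      have "psi1 t \<le> psi1 (factor t * t)"
        using block_factor_ge_1[of "nat \<lfloor>ln t\<rfloor>"] elim by (intro psi1_mono) simp
      thus ?case using psi1_pos[of t] by simp
    qed
    have "eventually (\<lambda>t. \<psi> (C * exp 1 * t) \<ge> 1) at_top"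
      using filterlim_compose[OF psi_at_top filterlim_const_mult_at_top[of "C * exp 1"]] C
      by (simp add: filterlim_at_top)
    thus "\<forall>\<^sub>F t in at_top. psi1 (factor t * t) / psi1 t \<le> \<psi> (K * t * \<psi> (K * t)) / \<psi> t"
      using eventually_ge_at_top[of 1]
    proof eventually_elim
      case (elim t)
      have "factor t \<le> 2 * C * \<psi> (C * exp 1 * t)" using elim by (intro factor_le) auto
      also have "\<dots> \<le> K * \<psi> (K * t)"
        using C elim K_def by (intro mult_mono psi_mono) (auto simp: K_def)
      finally have "factor t * t \<le> K * t * \<psi> (K * t)" using elim by (simp add: algebra_simps)
      moreover have "factor t * t \<ge> 1"
        using block_factor_ge_1[of "nat \<lfloor>ln t\<rfloor>"] elim by (metis mult_mono' mult_1_right zero_le_one)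
      ultimately have "psi1 (factor t * t) \<le> \<psi> (K * t * \<psi> (K * t))" by (simp add: psi1_eq psi_mono)
      thus ?case using elim psi1_eq[of t] psi_pos[of t] by (simp add: divide_right_mono)
    qed
  qed
qed

definition err :: "real \<Rightarrow> real" where "err s = max 0 (g s - f (factor s * s))"

lemma err_measurable[measurable]: "err \<in> borel_measurable borel"
  unfolding err_def by measurable

lemma eventually_g_le: "eventually (\<lambda>t. g t \<le> f (factor t * t) * (psi1 (factor t * t) / psi1 t)) at_top"
  using eventually_N_le_factor
proof eventually_elim
  case (elim t)
  have "g t \<le> F (factor t * t) / psi1 t"
    using monoD[OF F_mono elim] psi1_pos[of t] by (simp add: g_def divide_right_mono)
  also have "\<dots> = f (factor t * t) * (psi1 (factor t * t) / psi1 t)"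
    using psi1_pos[of "factor t * t"] by (simp add: f_def)
  finally show ?case .
qed

lemma err_tendsto_0: "(err \<longlongrightarrow> 0) at_top"
proof (rule tendsto_sandwich[OF _ _ tendsto_const])
  show "\<forall>\<^sub>F t in at_top. 0 \<le> err t" by (simp add: err_def)
  show "((\<lambda>t. C * (psi1 (factor t * t) / psi1 t - 1)) \<longlongrightarrow> 0) at_top"
    using tendsto_mult[OF tendsto_const tendsto_diff[OF psi1_factor_ratio tendsto_const], of C 1] by simp
  show "\<forall>\<^sub>F t in at_top. err t \<le> C * (psi1 (factor t * t) / psi1 t - 1)"
    using eventually_g_le eventually_ge_at_top[of 1]
  proof eventually_elim
    case (elim t)
    have "psi1 t \<le> psi1 (factor t * t)"
      using block_factor_ge_1[of "nat \<lfloor>ln t\<rfloor>"] elim by (intro psi1_mono) simp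
    hence ratio: "psi1 (factor t * t) / psi1 t \<ge> 1" using psi1_pos[of t] by simp
    have "g t - f (factor t * t) \<le> f (factor t * t) * (psi1 (factor t * t) / psi1 t - 1)"
      using elim by (simp add: algebra_simps)
    also have "\<dots> \<le> C * (psi1 (factor t * t) / psi1 t - 1)"
      using ratio f_le by (intro mult_right_mono) auto
    finally show ?case using ratio C by (simp add: err_def)
  qed
qed

lemma g_bounded: obtains B where "\<And>t. t \<ge> 1 \<Longrightarrow> g t \<le> B"
proof -
  have "eventually (\<lambda>t. psi1 (factor t * t) / psi1 t < 2) at_top"
    using psi1_factor_ratio by (rule order_tendstoD) simp
  hence "eventually (\<lambda>t. g t \<le> 2 * C) at_top"
    using eventually_g_le
  proof eventually_elim
    case (elim t)
    have "f (factor t * t) * (psi1 (factor t * t) / psi1 t) \<le> C * 2"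
      using elim f_le f_nonneg C less_imp_le[OF divide_pos_pos[OF psi1_pos psi1_pos]]
      by (intro mult_mono) auto
    thus ?case using elim by simp
  qed
  then obtain T0 where T0: "\<And>t. t \<ge> T0 \<Longrightarrow> g t \<le> 2 * C" by (auto simp: eventually_at_top_linorder)
  have "g t \<le> max (2 * C) (F (N (max 1 T0)) / psi1 1)" if t: "t \<ge> 1" for t
  proof (cases "t \<ge> T0")
    case False
    have "F (N t) \<le> F (N (max 1 T0))" using False by (intro monoD[OF F_mono] monoD[OF N_mono]) simp
    moreover have "psi1 1 \<le> psi1 t" using t by (rule psi1_mono)
    ultimately have "g t \<le> F (N (max 1 T0)) / psi1 1"
      unfolding g_def using psi1_pos F_nonneg by (intro frac_le) auto
    thus ?thesis by simp
  qed (simp add: T0 le_max_iff_disj)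
  thus ?thesis using that by blast
qed

lemma ln_factor_over_ln_tendsto_0: "((\<lambda>T. C * (ln (factor T) + 1) / ln T) \<longlongrightarrow> 0) at_top"
proof (rule Lim_null_comparison)
  let ?b = "\<lambda>T. C * ((ln (2 * C) + 1) / ln T + ln (\<psi> (C * exp 1 * T)) / ln T)"
  have "C * exp 1 > 0" using C by simp
  show "(?b \<longlongrightarrow> 0) at_top"
    using tendsto_mult[OF tendsto_const tendsto_add[OF tendsto_divide_0[OF tendsto_const
        filterlim_at_top_imp_at_infinity[OF ln_at_top]]
        ln_psi_dilated_over_ln_tendsto_0[OF \<open>C * exp 1 > 0\<close>]], of C "ln (2 * C) + 1"]
    by simp
  have "eventually (\<lambda>T. \<psi> (C * exp 1 * T) \<ge> 1) at_top"
    using filterlim_compose[OF psi_at_top filterlim_const_mult_at_top[OF \<open>C * exp 1 > 0\<close>]]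
    by (simp add: filterlim_at_top)
  thus "\<forall>\<^sub>F T in at_top. norm (C * (ln (factor T) + 1) / ln T) \<le> ?b T"
    using eventually_gt_at_top[of 1]
  proof eventually_elim
    case (elim T)
    have lnT: "ln T > 0" using elim by simp
    have "0 < factor T" using block_factor_ge_1[of "nat \<lfloor>ln T\<rfloor>"] by simp
    moreover have "0 < 2 * C * \<psi> (C * exp 1 * T)" using C elim by simp
    ultimately have "ln (factor T) \<le> ln (2 * C * \<psi> (C * exp 1 * T))"
      using factor_le[of T] elim by (subst ln_le_cancel_iff) auto
    also have "\<dots> = ln (2 * C) + ln (\<psi> (C * exp 1 * T))" using C elim by (subst ln_mult) auto
    finally have le: "ln (factor T) \<le> ln (2 * C) + ln (\<psi> (C * exp 1 * T))" .
    have "0 \<le> ln (factor T)" using block_factor_ge_1 by simp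
    hence "norm (C * (ln (factor T) + 1) / ln T) = C * (ln (factor T) + 1) / ln T" using C lnT by simp
    also have "\<dots> \<le> C * (ln (2 * C) + ln (\<psi> (C * exp 1 * T)) + 1) / ln T"
      using le C lnT by (intro divide_right_mono mult_left_mono) auto
    also have "\<dots> = ?b T" using lnT by (simp add: field_simps)
    finally show ?case .
  qed
qed

definition psi1_inv :: "real \<Rightarrow> real" where "psi1_inv s = 1 / psi1 s"

lemma psi1_inv_measurable[measurable]: "psi1_inv \<in> borel_measurable borel"
  unfolding psi1_inv_def by measurable

lemma psi1_inv_tendsto_0: "(psi1_inv \<longlongrightarrow> 0) at_top"
proof -
  have "eventually (\<lambda>s. \<psi> s \<le> psi1 s) at_top"
    using eventually_ge_at_top[of 1] by eventually_elim (simp add: psi1_eq)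
  hence "filterlim psi1 at_top at_top" by (rule filterlim_at_top_mono[OF psi_at_top])
  thus ?thesis unfolding psi1_inv_def[abs_def] by (simp add: tendsto_inverse_0_at_top divide_inverse)
qed

lemma uniform_bound:
  obtains M where "\<And>s. s \<ge> 1 \<Longrightarrow> 0 \<le> f s \<and> f s \<le> M" "\<And>s. s \<ge> 1 \<Longrightarrow> 0 \<le> g s \<and> g s \<le> M"
    "\<And>s. s \<ge> 1 \<Longrightarrow> 0 \<le> psi1_inv s \<and> psi1_inv s \<le> M" "\<And>s. s \<ge> 1 \<Longrightarrow> 0 \<le> err s \<and> err s \<le> M"
proof -
  obtain B where B: "\<And>t. t \<ge> 1 \<Longrightarrow> g t \<le> B" using g_bounded by blast
  have inv: "0 \<le> psi1_inv s \<and> psi1_inv s \<le> 1 / \<psi> 1" if "s \<ge> 1" for s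
    using psi1_mono[OF that] psi1_pos[of 1] psi1_pos[of s] by (auto simp: psi1_inv_def psi1_eq frac_le)
  have B0: "0 \<le> B" using B[of 1] g_nonneg[of 1] by simp
  have psi0: "0 \<le> 1 / \<psi> 1" using psi_pos[of 1] by simp
  show ?thesis
  proof (rule that)
    fix s :: real assume s: "s \<ge> 1"
    show "0 \<le> f s \<and> f s \<le> C + B + 1 / \<psi> 1"
      using f_nonneg[of s] f_le[of s] B0 psi0 by (intro conjI; linarith)
    show "0 \<le> g s \<and> g s \<le> C + B + 1 / \<psi> 1"
      using g_nonneg[of s] B[OF s] C psi0 by (intro conjI; linarith)
    show "0 \<le> psi1_inv s \<and> psi1_inv s \<le> C + B + 1 / \<psi> 1"
      using inv[OF s] C B0 by (intro conjI; linarith)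
    show "0 \<le> err s \<and> err s \<le> C + B + 1 / \<psi> 1"
      using g_nonneg[of s] B[OF s] f_nonneg[of "factor s * s"] C psi0 unfolding err_def
      by (intro conjI; linarith)
  qed
qed

lemma Mop_f_le:
  assumes T: "T > 1" shows "Mop f T \<le> Mop g T + Mop psi1_inv T"
proof -
  obtain M where M: "\<And>s. s \<ge> 1 \<Longrightarrow> 0 \<le> f s \<and> f s \<le> M" "\<And>s. s \<ge> 1 \<Longrightarrow> 0 \<le> g s \<and> g s \<le> M"
    "\<And>s. s \<ge> 1 \<Longrightarrow> 0 \<le> psi1_inv s \<and> psi1_inv s \<le> M" using uniform_bound by metis
  have "log_integral f T \<le> log_integral (\<lambda>s. g s + psi1_inv s) T"
    by (rule log_integral_mono) (simp add: f_le_g psi1_inv_def)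
  also have "\<dots> = log_integral g T + log_integral psi1_inv T + ennreal 0"
    using g_nonneg M(3) by (simp add: log_integral_add)
  finally have "Mop f T \<le> Mop g T + Mop psi1_inv T + 0 / ln T"
    by (intro Mop_le_Mop_add[OF _ _ _ M]) (use T in auto)
  thus ?thesis by simp
qed

lemma Mop_g_le:
  assumes T: "T > 1" shows "Mop g T \<le> Mop f T + Mop err T + C * (ln (factor T) + 1) / ln T"
proof -
  obtain M where M: "\<And>s. s \<ge> 1 \<Longrightarrow> 0 \<le> f s \<and> f s \<le> M" "\<And>s. s \<ge> 1 \<Longrightarrow> 0 \<le> g s \<and> g s \<le> M"
    "\<And>s. s \<ge> 1 \<Longrightarrow> 0 \<le> err s \<and> err s \<le> M" using uniform_bound by metis
  have "log_integral g T \<le> log_integral (\<lambda>s. f (factor s * s) + err s) T"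
    by (rule log_integral_mono) (simp add: err_def)
  also have "\<dots> = log_integral (\<lambda>s. f (factor s * s)) T + log_integral err T"
    using f_nonneg by (intro log_integral_add) (auto simp: err_def)
  also have "\<dots> \<le> log_integral f T + ennreal (C * (ln (factor T) + 1)) + log_integral err T"
    using log_integral_blockwise_dilation[OF f_measurable _ block_factor_incseq block_factor_ge_1]
      f_nonneg f_le T by (intro add_right_mono) auto
  finally show ?thesis
    using block_factor_ge_1 C by (intro Mop_le_Mop_add[OF _ _ _ M(2,1,3)]) (use T in \<open>auto simp: algebra_simps\<close>)
qed

lemma Mop_f_minus_Mop_g_tendsto_0: "((\<lambda>T. Mop f T - Mop g T) \<longlongrightarrow> 0) at_top"
proof (rule Lim_null_comparison)
  obtain M where M: "\<And>s. s \<ge> 1 \<Longrightarrow> 0 \<le> psi1_inv s \<and> psi1_inv s \<le> M"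
    "\<And>s. s \<ge> 1 \<Longrightarrow> 0 \<le> err s \<and> err s \<le> M" using uniform_bound by metis
  have lim: "(Mop psi1_inv \<longlongrightarrow> 0) at_top" "(Mop err \<longlongrightarrow> 0) at_top"
    using Mop_tendsto_0[OF _ M(1) psi1_inv_tendsto_0] Mop_tendsto_0[OF _ M(2) err_tendsto_0] by auto
  show "((\<lambda>T. Mop psi1_inv T + Mop err T + C * (ln (factor T) + 1) / ln T) \<longlongrightarrow> 0) at_top"
    using tendsto_add[OF tendsto_add[OF lim] ln_factor_over_ln_tendsto_0] by simp
  show "\<forall>\<^sub>F T in at_top. norm (Mop f T - Mop g T) \<le> Mop psi1_inv T + Mop err T + C * (ln (factor T) + 1) / ln T"
    using eventually_gt_at_top[of 1]
  proof eventually_elim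
    case (elim T)
    have "0 \<le> Mop psi1_inv T" "0 \<le> Mop err T"
      using Mop_nonneg[OF psi1_inv_measurable M(1)] Mop_nonneg[OF err_measurable M(2)] by auto
    moreover have "0 \<le> C * (ln (factor T) + 1) / ln T"
      using C elim block_factor_ge_1[of "nat \<lfloor>ln T\<rfloor>"] by simp
    ultimately show ?case using Mop_f_le[OF elim] Mop_g_le[OF elim]
      by (simp only: real_norm_def abs_le_iff) linarith
  qed
qed

end

section \<open>The trace formula\<close>

lemma gen_limit_eq_if_diff_tendsto_0:
  assumes \<gamma>: "gen_limit \<gamma>" and y: "y \<in> Linf" and z: "z \<in> Linf"
    and lim: "((\<lambda>t. y t - z t) \<longlongrightarrow> 0) at_top"
  shows "\<gamma> y = \<gamma> z"
proof -
  obtain Cy Cz where Cy: "AE s in lborel. 0 < s \<longrightarrow> \<bar>y s\<bar> \<le> Cy"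
    and Cz: "AE s in lborel. 0 < s \<longrightarrow> \<bar>z s\<bar> \<le> Cz" using y z by (auto simp: Linf_def)
  have "AE s in lborel. 0 < s \<longrightarrow> \<bar>1 * y s + (-1) * z s\<bar> \<le> Cy + Cz"
    using Cy Cz by eventually_elim auto
  hence diff: "(\<lambda>t. 1 * y t + (-1) * z t) \<in> Linf" using y z by (auto simp: Linf_def)
  have "\<gamma> (\<lambda>t. 1 * y t + (-1) * z t) = 1 * \<gamma> y + (-1) * \<gamma> z"
    using \<gamma> y z unfolding gen_limit_def by blast
  moreover have "\<gamma> (\<lambda>t. 1 * y t + (-1) * z t) = 0"
    using \<gamma> diff lim unfolding gen_limit_def by simp
  ultimately show ?thesis by simp
qed

lemma (in M_psi_fun) log_mean_comparison:
  assumes "slowly_varying_Psi \<psi>" and C: "C \<ge> 1" "\<And>t. t > 0 \<Longrightarrow> Fx t \<le> C * \<psi> t"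
  shows "log_mean_comparison \<psi> Fx (\<lambda>t. nx (1 / max 1 t)) C"
proof -
  interpret slowly_varying_Psi \<psi> by (rule assms(1))
  show ?thesis
  proof unfold_locales
    show "mono Fx" by (simp add: mono_def Fx_mono)
    show "mono (\<lambda>t. nx (1 / max 1 t))" by (auto simp: mono_def frac_le intro!: nx_antimono)
    show "nx (1 / max 1 t) / t \<le> Fx (nx (1 / max 1 t))" if "1 \<le> t" for t
      using Fx_nx_ge[of "1 / t"] that by (simp add: max_def)
    show "Fx t \<le> Fx (nx (1 / max 1 t)) + max 0 (t - nx (1 / max 1 t)) / t" if "1 \<le> t" for t
      using Fx_le_Fx_nx[of "1 / t" t] that by (simp add: max_def)
  qed (use C nx_nonneg in auto)
qed

theorem theorem2p7:
  fixes \<psi> :: "real \<Rightarrow> real" and \<gamma> :: "(real \<Rightarrow> real) \<Rightarrow> real" and x :: "real \<Rightarrow> real"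
  assumes "\<psi> \<in> Psi_class"
    and "((\<lambda>t. \<psi> (t * \<psi> t) / \<psi> t) \<longlongrightarrow> 1) at_top"
    and "gen_limit \<gamma>"
    and "x \<in> M_psi \<psi>"
    and "\<forall>s>0. 0 \<le> x s"
  shows "CD_trace (\<gamma> \<circ> Mop) \<psi> x =
         (\<gamma> \<circ> Mop) (\<lambda>t. stieltjes_tail x (1 / t) / \<psi> t)"
proof -
  interpret M_psi_fun \<psi> x using assms(1,4) by unfold_locales
  have slow: "slowly_varying_Psi \<psi>" using assms(1,2) by unfold_locales
  obtain C where C: "C \<ge> 1" "\<And>t. t > 0 \<Longrightarrow> Fx t \<le> C * \<psi> t" using Fx_le_psi by auto
  interpret log_mean_comparison \<psi> Fx "\<lambda>t. nx (1 / max 1 t)" C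
    by (rule log_mean_comparison[OF slow C])
  have "Mop (\<lambda>t. (LBINT s:{0..t}. rearr x s) / \<psi> t) = Mop f"
    by (rule Mop_cong) (simp add: f_def Fx_def psi1_eq)
  moreover have "Mop (\<lambda>t. stieltjes_tail x (1 / t) / \<psi> t) = Mop g"
    by (rule Mop_cong) (simp add: g_def stieltjes_tail_eq psi1_eq max_absorb2)
  moreover obtain B where "\<And>t. t \<ge> 1 \<Longrightarrow> g t \<le> B" using g_bounded by blast
  hence "\<gamma> (Mop f) = \<gamma> (Mop g)"
    using f_nonneg f_le g_nonneg Mop_f_minus_Mop_g_tendsto_0
    by (intro gen_limit_eq_if_diff_tendsto_0[OF assms(3)] Mop_in_Linf[of _ B] Mop_in_Linf[of _ C]) auto
  ultimately show ?thesis by (simp add: CD_trace_def)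
qed

end
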